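(* In the setting described in the context, with all standing assumptions in force, for every $i\in\{1,\dots,N\}$, $$\lim_{t\to\infty}\big\|\hat{\mathbf x}_{(i,\ell_i^t)}(\mathbf x_{(i,:)}^t)-\tilde{\mathbf x}_{(i,\ell_i^t)}^t\big\|=0 .$$
   Context: Problem. Let $N,B,d\ge1$. A vector $\mathbf x\in\mathbb R^{dB}$ is partitioned into blocks $\mathbf x=(\mathbf x_1,\dots,\mathbf x_B)$ with $\mathbf x_\ell\in\mathbb R^d$, and $\nabla_\ell$ denotes the partial gradient with respect to block $\ell$. Problem (P) is $$\min_{\mathbf x}\ U(\mathbf x)=\sum_{i=1}^Nf_i(\mathbf x)+\sum_{\ell=1}^B r_\ell(\mathbf x_\ell)\quad\text{s.t. }\mathbf x_\ell\in\mathcal K_\ell,\ \ell=1,\dots,B,$$ with $\mathcal K=\mathcal K_1\times\dots\times\mathcal K_B$. Problem assumptions: - each $\mathcal K_\ell\subseteq\mathbb R^d$ is nonempty, closed and convex; - each $f_i:\mathbb R^{dB}\to\mathbb R$ is $C^1$ on an open set containing $\mathcal K$, and $\nabla f_i$ is $L_i$-Lipschitz continuous and bounded on $\mathcal K$; - each $r_\ell:\mathbb R^d\to\mathbb R$ is convex with bounded subgradients on $\mathcal K_\ell$; - $U$ is coercive on $\mathcal K$. Network. $\mathcal G=(\{1,\dots,N\},\mathcal E)$ is a fixed, strongly connected digraph containing all self-loops. The in-neighbor set of $i$ is $\mathcal N_i=\{j:(j,i)\in\mathcal E\}$. Block selection. At each iteration $t\ge0$, agent $i$ picks $\ell_i^t\in\{1,\dots,B\}$.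 For each $i$ there is a finite $T_i>0$ with $\bigcup_{\tau=0}^{T_i-1}\{\ell_i^{t+\tau}\}=\{1,\dots,B\}$ for all $t\ge0$. Define $\mathcal N_{i,\ell}^t=\{j\in\mathcal N_i:\ell_j^t=\ell\}\cup\{i\}$ and $\mathcal E_\ell^t=\{(j,i)\in\mathcal E:j\in\mathcal N_{i,\ell}^t\}$. Weights. For each $\ell$ and $t$, $A_\ell^t=[a_{ij\ell}^t]$ satisfies $a_{ij\ell}^t>\kappa$ if $(j,i)\in\mathcal E_\ell^t$, $a_{ij\ell}^t=0$ otherwise (for a fixed $\kappa>0$), and $\mathbf 1^\top A_\ell^t=\mathbf 1^\top$. Surrogates. For each $i,\ell$, $\tilde f_{i,\ell}:\mathcal K_\ell\times\mathcal K\to\mathbb R$ satisfies: - $\tilde f_{i,\ell}(\cdot;\mathbf x)$ is $C^1$ and $\tau_i$-strongly convex on $\mathcal K_\ell$ uniformly in $\mathbf x\in\mathcal K$, with $\tau_i>0$; - $\nabla\tilde f_{i,\ell}(\mathbf x_\ell;\mathbf x)=\nabla_\ell f_i(\mathbf x)$ for all $\mathbf x\in\mathcal K$, where $\nabla\tilde f_{i,\ell}$ is the gradient in the first argument and $\mathbf x_\ell$ is the $\ell$-th block of $\mathbf x$; - $\nabla\tilde f_{i,\ell}(\mathbf z;\cdot)$ is Lipschitz continuous on $\mathcal K$ uniformly in $\mathbf z\in\mathcal K_\ell$. For $\mathbf w\in\mathcal K$ and $\mathbf g\in\mathbb R^d$ let $$\hat f_{i,\ell}(\mathbf z;\mathbf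 w,\mathbf g)=\tilde f_{i,\ell}(\mathbf z;\mathbf w)+(N\mathbf g-\nabla_\ell f_i(\mathbf w))^\top(\mathbf z-\mathbf w_\ell).$$ Best-response map: for $\mathbf w\in\mathcal K$ define $$\hat{\mathbf x}_{(i,\ell)}(\mathbf w)=\arg\min_{\mathbf z\in\mathcal K_\ell}\ \hat f_{i,\ell}\Big(\mathbf z;\mathbf w,\tfrac1N\sum_{j=1}^N\nabla_\ell f_j(\mathbf w)\Big)+r_\ell(\mathbf z).$$ Step sizes. $0<\gamma^t\le1$, $\gamma^{t+1}\le\gamma^t$, $\sum_t\gamma^t=\infty$, $\sum_t(\gamma^t)^2<\infty$. Algorithm. Agent $i$ holds $\mathbf x_{(i,:)}^t=(\mathbf x_{(i,\ell)}^t)_\ell$, $\mathbf y_{(i,:)}^t=(\mathbf y_{(i,\ell)}^t)_\ell$ in $\mathbb R^{dB}$ and scalars $\phi_{(i,\ell)}^t$. Initialization: $\mathbf x_{(i,:)}^0\in\mathcal K$ arbitrary, $\mathbf y_{(i,:)}^0=\nabla f_i(\mathbf x_{(i,:)}^0)$, $\phi_{(i,\ell)}^0=1$. At iteration $t$, each agent $i$: - computes $\tilde{\mathbf x}_{(i,\ell_i^t)}^t=\arg\min_{\mathbf z\in\mathcal K_{\ell_i^t}}\hat f_{i,\ell_i^t}(\mathbf z;\mathbf x_{(i,:)}^t,\mathbf y_{(i,\ell_i^t)}^t)+r_{\ell_i^t}(\mathbf z)$; - sets $\Delta\mathbf x_{(i,\ell)}^t=\tilde{\mathbf x}_{(i,\ell)}^t-\mathbf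 x_{(i,\ell)}^t$ if $\ell=\ell_i^t$ and $\Delta\mathbf x_{(i,\ell)}^t=\mathbf 0$ otherwise; - for every $\ell$ updates $$\phi_{(i,\ell)}^{t+1}=\sum_{j\in\mathcal N_{i,\ell}^t}a_{ij\ell}^t\phi_{(j,\ell)}^t,\qquad \mathbf x_{(i,\ell)}^{t+1}=\sum_{j\in\mathcal N_{i,\ell}^t}\frac{a_{ij\ell}^t\phi_{(j,\ell)}^t}{\phi_{(i,\ell)}^{t+1}}\big(\mathbf x_{(j,\ell)}^t+\gamma^t\Delta\mathbf x_{(j,\ell)}^t\big),$$ $$\mathbf y_{(i,\ell)}^{t+1}=\sum_{j\in\mathcal N_{i,\ell}^t}\frac{a_{ij\ell}^t}{\phi_{(i,\ell)}^{t+1}}\Big(\phi_{(j,\ell)}^t\mathbf y_{(j,\ell)}^t+\nabla_\ell f_j(\mathbf x_{(j,:)}^{t+1})-\nabla_\ell f_j(\mathbf x_{(j,:)}^t)\Big).$$ *)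

theory Defs
  imports "HOL-Analysis.Analysis"
begin

definition strongly_convex_on :: "'a::real_normed_vector set \<Rightarrow> real \<Rightarrow> ('a \<Rightarrow> real) \<Rightarrow> bool" where
  "strongly_convex_on S \<tau> g \<longleftrightarrow>
     (\<forall>u\<in>S. \<forall>v\<in>S. \<forall>\<theta>::real. 0 \<le> \<theta> \<and> \<theta> \<le> 1 \<longrightarrow>
        g (\<theta> *\<^sub>R u + (1 - \<theta>) *\<^sub>R v) \<le> \<theta> * g u + (1 - \<theta>) * g v - \<tau> / 2 * \<theta> * (1 - \<theta>) * (norm (u - v))\<^sup>2)"

text \<open>The (unique, under the standing assumptions) minimiser of F over S.\<close>
definition argmin_on :: "'a set \<Rightarrow> ('a \<Rightarrow> real) \<Rightarrow> 'a" where
  "argmin_on S F = (THE z. z \<in> S \<and> (\<forall>y\<in>S. F z \<le> F y))"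

definition is_subgradient :: "('a::real_inner \<Rightarrow> real) \<Rightarrow> 'a \<Rightarrow> 'a \<Rightarrow> bool" where
  "is_subgradient g z v \<longleftrightarrow> (\<forall>w. g z + v \<bullet> (w - z) \<le> g w)"

definition prodK :: "('b::finite \<Rightarrow> 'a set) \<Rightarrow> ('a ^ 'b) set" where
  "prodK K = {x. \<forall>l. x $ l \<in> K l}"

definition in_nbrs :: "('n \<times> 'n) set \<Rightarrow> 'n \<Rightarrow> 'n set" where
  "in_nbrs E i = {j. (j, i) \<in> E}"

definition nbrs_blk :: "('n \<times> 'n) set \<Rightarrow> ('n \<Rightarrow> nat \<Rightarrow> 'b) \<Rightarrow> 'n \<Rightarrow> 'b \<Rightarrow> nat \<Rightarrow> 'n set" where
  "nbrs_blk E sel i l t = {j \<in> in_nbrs E i. sel j t = l} \<union> {i}"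

definition edges_blk :: "('n \<times> 'n) set \<Rightarrow> ('n \<Rightarrow> nat \<Rightarrow> 'b) \<Rightarrow> 'b \<Rightarrow> nat \<Rightarrow> ('n \<times> 'n) set" where
  "edges_blk E sel l t = {(j, i) \<in> E. j \<in> nbrs_blk E sel i l t}"

definition fhat :: "('n::finite \<Rightarrow> 'b::finite \<Rightarrow> real^'d \<Rightarrow> real^'d^'b \<Rightarrow> real)
     \<Rightarrow> ('n \<Rightarrow> real^'d^'b \<Rightarrow> real^'d^'b) \<Rightarrow> 'n \<Rightarrow> 'b \<Rightarrow> real^'d \<Rightarrow> real^'d^'b \<Rightarrow> real^'d \<Rightarrow> real" where
  "fhat ft gf i l z w g = ft i l z w + (real CARD('n) *\<^sub>R g - gf i w $ l) \<bullet> (z - w $ l)"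

definition xhat :: "('n::finite \<Rightarrow> 'b::finite \<Rightarrow> real^'d \<Rightarrow> real^'d^'b \<Rightarrow> real)
     \<Rightarrow> ('n \<Rightarrow> real^'d^'b \<Rightarrow> real^'d^'b) \<Rightarrow> ('b \<Rightarrow> real^'d \<Rightarrow> real) \<Rightarrow> ('b \<Rightarrow> (real^'d) set)
     \<Rightarrow> 'n \<Rightarrow> 'b \<Rightarrow> real^'d^'b \<Rightarrow> real^'d" where
  "xhat ft gf r K i l w = argmin_on (K l)
     (\<lambda>z. fhat ft gf i l z w ((1 / real CARD('n)) *\<^sub>R (\<Sum>j\<in>UNIV. gf j w $ l)) + r l z)"

end

theory Submission
  imports Defs
begin

text \<open>The local best response minimises a \<open>\<tau>\<close>-strongly convex function that depends on the
  gradient estimate only through a linear term, so the gap between \<open>xhat\<close> at \<open>X t i\<close> and \<open>xt t i\<close>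
  is at most \<open>N / \<tau> i\<close> times the distance between \<open>Y t i\<close> and the average gradient at \<open>X t i\<close>.
  The push-sum weights \<open>\<Phi>\<close> stay bounded below, so the normalised mixing matrices are row
  stochastic with entries bounded below on the active edges; since every edge of the strongly
  connected graph is active for every block within a fixed window, their products over a fixed
  number of steps have all entries bounded below. Hence the spread of any perturbed consensus
  iteration contracts geometrically up to its perturbation. For \<open>X\<close> the perturbation is \<open>\<gamma> t\<close>
  times a bounded step, so the agents' copies agree asymptotically and their increments vanish;
  for \<open>Y\<close> the perturbation is the change of the local gradients, which then vanishes too.
  Finally the \<open>\<Phi>\<close>-weighted sum of the \<open>Y t j\<close> always equals the sum of the current gradients,
  so \<open>Y t i\<close> approaches the average gradient, and Lipschitz gradients carry the agreement of
  the \<open>X t j\<close> over to the gradients evaluated at \<open>X t i\<close>.\<close>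

section \<open>Strongly convex minimisation\<close>

lemma strongly_convex_on_imp_convex_on:
  assumes "strongly_convex_on S \<tau> g" "0 \<le> \<tau>" "convex S"
  shows "convex_on S g"
proof (rule convex_onI)
  fix t :: real and x y assume t: "0 < t" "t < 1" and "x \<in> S" "y \<in> S"
  then have "g (t *\<^sub>R y + (1 - t) *\<^sub>R x)
      \<le> t * g y + (1 - t) * g x - \<tau> / 2 * t * (1 - t) * (norm (y - x))\<^sup>2"
    using assms(1) unfolding strongly_convex_on_def by simp
  moreover have "0 \<le> \<tau> / 2 * t * (1 - t) * (norm (y - x))\<^sup>2"
    using t \<open>0 \<le> \<tau>\<close> by simp
  ultimately show "g ((1 - t) *\<^sub>R x + t *\<^sub>R y) \<le> (1 - t) * g x + t * g y"
    by (simp add: add.commute)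
qed (rule \<open>convex S\<close>)

lemma strongly_convex_on_min_growth:
  fixes F :: "'a::real_normed_vector \<Rightarrow> real"
  assumes sc: "strongly_convex_on S \<tau> F" and "convex S"
    and z: "z \<in> S" "\<forall>y\<in>S. F z \<le> F y" and y: "y \<in> S"
  shows "F z + \<tau> / 2 * (norm (y - z))\<^sup>2 \<le> F y"
proof -
  have "\<tau> / 2 * (norm (y - z))\<^sup>2 \<le> F y - F z"
  proof (rule field_le_mult_one_interval)
    fix s :: real assume s: "0 < s" "s < 1"
    define \<theta> where "\<theta> = 1 - s"
    have \<theta>: "0 < \<theta>" "\<theta> < 1" using s by (simp_all add: \<theta>_def)
    have "F z \<le> F (\<theta> *\<^sub>R y + (1 - \<theta>) *\<^sub>R z)"
      using z \<open>convex S\<close> y \<theta> by (simp add: convex_def)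
    also have "\<dots> \<le> \<theta> * F y + (1 - \<theta>) * F z - \<tau> / 2 * \<theta> * (1 - \<theta>) * (norm (y - z))\<^sup>2"
      using sc y z \<theta> unfolding strongly_convex_on_def by simp
    finally have "\<theta> * (s * (\<tau> / 2 * (norm (y - z))\<^sup>2)) \<le> \<theta> * (F y - F z)"
      by (simp add: \<theta>_def algebra_simps)
    then show "s * (\<tau> / 2 * (norm (y - z))\<^sup>2) \<le> F y - F z"
      using \<theta> by simp
  qed
  then show ?thesis by simp
qed

lemma strongly_convex_on_eventually_above:
  fixes F :: "'a::real_normed_vector \<Rightarrow> real"
  assumes sc: "strongly_convex_on S \<tau> F" and "0 < \<tau>" and "convex S"
    and "z0 \<in> S" and "continuous_on S F"
  obtains R where "\<And>z. z \<in> S \<Longrightarrow> R \<le> norm (z - z0) \<Longrightarrow> F z0 < F z"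
proof -
  obtain \<delta> where "\<delta> > 0" and near: "\<And>z. z \<in> S \<Longrightarrow> dist z z0 < \<delta> \<Longrightarrow> dist (F z) (F z0) < 1"
    using \<open>continuous_on S F\<close> \<open>z0 \<in> S\<close> unfolding continuous_on_iff by (metis zero_less_one)
  have "F z0 < F z" if "z \<in> S" and far: "8 / (\<tau> * \<delta>) + \<delta> \<le> norm (z - z0)" for z
  proof -
    define D where "D = norm (z - z0)"
    have "0 \<le> 8 / (\<tau> * \<delta>)" using \<open>\<delta> > 0\<close> \<open>0 < \<tau>\<close> by simp
    then have D: "8 / (\<tau> * \<delta>) \<le> D \<and> \<delta> \<le> D" using far \<open>\<delta> > 0\<close> unfolding D_def by (intro conjI) linarith+
    then have "D > 0" using \<open>\<delta> > 0\<close> by simp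
    (* p is the point of the segment from z0 to z at distance \<delta>/2 from z0, where continuity keeps F
       above F z0 - 1, while strong convexity pushes F p below F z0 - 1 unless F z > F z0. *)
    define \<theta> where "\<theta> = \<delta> / (2 * D)"
    have \<theta>: "0 < \<theta>" "\<theta> \<le> 1/2" using \<open>\<delta> > 0\<close> \<open>D > 0\<close> D by (simp_all add: \<theta>_def field_simps)
    define p where "p = \<theta> *\<^sub>R z + (1 - \<theta>) *\<^sub>R z0"
    have "p \<in> S" using \<open>convex S\<close> \<open>z \<in> S\<close> \<open>z0 \<in> S\<close> \<theta> by (simp add: convex_def p_def)
    have "norm (p - z0) = \<theta> * D"
      using \<theta> by (simp add: p_def D_def algebra_simps flip: scaleR_diff_right)
    also have "\<dots> = \<delta> / 2" using \<open>D > 0\<close> by (simp add: \<theta>_def)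
    finally have "F z0 - 1 < F p"
      using near[OF \<open>p \<in> S\<close>] \<open>\<delta> > 0\<close> by (simp add: dist_norm abs_less_iff)
    moreover have "F p \<le> \<theta> * F z + (1 - \<theta>) * F z0 - \<tau> / 2 * \<theta> * (1 - \<theta>) * D\<^sup>2"
      using sc \<open>z \<in> S\<close> \<open>z0 \<in> S\<close> \<theta> unfolding strongly_convex_on_def p_def D_def by simp
    then have "F p - F z0 + \<tau> / 2 * \<theta> * (1 - \<theta>) * D\<^sup>2 \<le> \<theta> * (F z - F z0)"
      by (simp add: algebra_simps)
    moreover have "\<tau> / 2 * \<theta> * (1/2) * D\<^sup>2 \<le> \<tau> / 2 * \<theta> * (1 - \<theta>) * D\<^sup>2"
      using \<theta> \<open>0 < \<tau>\<close> by (intro mult_left_mono mult_right_mono) auto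
    moreover have "\<tau> / 2 * \<theta> * (1/2) * D\<^sup>2 = \<tau> * \<delta> * D / 8"
      using \<open>D > 0\<close> by (simp add: \<theta>_def power2_eq_square field_simps)
    moreover have "1 \<le> \<tau> * \<delta> * D / 8"
      using mult_left_mono[OF conjunct1[OF D], of "\<tau> * \<delta>"] \<open>0 < \<tau>\<close> \<open>\<delta> > 0\<close> by simp
    ultimately have "0 < \<theta> * (F z - F z0)" by linarith
    then show ?thesis using \<theta> by (simp add: zero_less_mult_iff)
  qed
  then show ?thesis using that by blast
qed

lemma strongly_convex_on_attains_min:
  fixes F :: "'a::euclidean_space \<Rightarrow> real"
  assumes "strongly_convex_on S \<tau> F" "0 < \<tau>" "convex S" "closed S" "S \<noteq> {}"
    and cont: "continuous_on S F"
  obtains z where "z \<in> S" "\<forall>y\<in>S. F z \<le> F y"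
proof -
  obtain z0 where "z0 \<in> S" using \<open>S \<noteq> {}\<close> by blast
  obtain R where far: "\<And>z. z \<in> S \<Longrightarrow> R \<le> norm (z - z0) \<Longrightarrow> F z0 < F z"
    using strongly_convex_on_eventually_above assms \<open>z0 \<in> S\<close> by metis
  define C where "C = cball z0 R \<inter> S"
  have "compact C" using compact_Int_closed[OF compact_cball \<open>closed S\<close>] by (simp add: C_def)
  have "z0 \<in> C"
    using \<open>z0 \<in> S\<close> far[OF \<open>z0 \<in> S\<close>] by (force simp: C_def)
  moreover have "continuous_on C F" using continuous_on_subset[OF cont] by (simp add: C_def)
  ultimately obtain w where "w \<in> C" and wmin: "\<And>y. y \<in> C \<Longrightarrow> F w \<le> F y"
    using continuous_attains_inf[OF \<open>compact C\<close>] by blast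
  have "F w \<le> F y" if "y \<in> S" for y
  proof (cases "y \<in> C")
    case False
    then have "F z0 < F y"
      using far \<open>y \<in> S\<close> by (auto simp: C_def dist_norm norm_minus_commute)
    then show ?thesis using wmin[OF \<open>z0 \<in> C\<close>] by simp
  qed (use wmin in blast)
  then show ?thesis using that \<open>w \<in> C\<close> by (auto simp: C_def)
qed

lemma argmin_on_strongly_convex:
  fixes F :: "'a::euclidean_space \<Rightarrow> real"
  assumes sc: "strongly_convex_on S \<tau> F" and "0 < \<tau>" "convex S" "closed S" "S \<noteq> {}"
    and "continuous_on S F"
  shows "argmin_on S F \<in> S"
    and "\<And>y. y \<in> S \<Longrightarrow> F (argmin_on S F) + \<tau> / 2 * (norm (y - argmin_on S F))\<^sup>2 \<le> F y"
proof -
  obtain z where z: "z \<in> S" "\<forall>y\<in>S. F z \<le> F y"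
    using strongly_convex_on_attains_min assms by blast
  note growth = strongly_convex_on_min_growth[OF sc \<open>convex S\<close> z]
  have "argmin_on S F = z" unfolding argmin_on_def
  proof (rule the_equality)
    fix w assume w: "w \<in> S \<and> (\<forall>y\<in>S. F w \<le> F y)"
    then have "\<tau> / 2 * (norm (w - z))\<^sup>2 \<le> 0" using growth[of w] z by force
    then show "w = z" using \<open>0 < \<tau>\<close> by (simp add: mult_le_0_iff)
  qed (use z in blast)
  then show "argmin_on S F \<in> S" "\<And>y. y \<in> S \<Longrightarrow> F (argmin_on S F) + \<tau> / 2 * (norm (y - argmin_on S F))\<^sup>2 \<le> F y"
    using z growth by auto
qed

lemma le_divide_of_square_le:
  fixes d c \<tau> :: real
  assumes "0 \<le> d" "0 < \<tau>" "0 \<le> c" "\<tau> * d\<^sup>2 \<le> c * d"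
  shows "d \<le> c / \<tau>"
proof (cases "d = 0")
  case False
  then have "\<tau> * d \<le> c" using assms by (simp add: power2_eq_square)
  then show ?thesis using \<open>0 < \<tau>\<close> by (simp add: field_simps)
qed (use assms in simp)

lemma argmin_on_dist_le:
  fixes F :: "'a::euclidean_space \<Rightarrow> real"
  assumes "strongly_convex_on S \<tau> F" "0 < \<tau>" "convex S" "closed S" "continuous_on S F"
    and "x \<in> S" and sub: "\<And>z. z \<in> S \<Longrightarrow> F x + v \<bullet> (z - x) \<le> F z"
  shows "norm (argmin_on S F - x) \<le> 2 * norm v / \<tau>"
proof -
  define z where "z = argmin_on S F"
  have "S \<noteq> {}" using \<open>x \<in> S\<close> by blast
  note argmin = argmin_on_strongly_convex[OF assms(1-4) this assms(5), folded z_def]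
  have "\<tau> / 2 * (norm (z - x))\<^sup>2 \<le> - (v \<bullet> (z - x))"
    using argmin(2)[OF \<open>x \<in> S\<close>] sub[OF argmin(1)] by (simp add: norm_minus_commute)
  also have "\<dots> \<le> norm v * norm (z - x)"
    using Cauchy_Schwarz_ineq2[of v "z - x"] by linarith
  finally have "\<tau> / 2 * (norm (z - x))\<^sup>2 \<le> norm v * norm (z - x)" .
  then show ?thesis
    using le_divide_of_square_le[of "norm (z - x)" "\<tau> / 2" "norm v"] \<open>0 < \<tau>\<close>
    by (simp add: z_def field_simps)
qed

lemma argmin_on_linear_perturbation:
  fixes F G :: "'a::euclidean_space \<Rightarrow> real"
  assumes "strongly_convex_on S \<tau> F" "strongly_convex_on S \<tau> G" "0 < \<tau>"
    and "convex S" "closed S" "S \<noteq> {}" "continuous_on S F" "continuous_on S G"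
    and diff: "\<And>z. G z - F z = v \<bullet> (z - w)"
  shows "norm (argmin_on S F - argmin_on S G) \<le> norm v / \<tau>"
proof -
  define z1 where "z1 = argmin_on S F"
  define z2 where "z2 = argmin_on S G"
  note F_min = argmin_on_strongly_convex[OF assms(1,3-7), folded z1_def]
  note G_min = argmin_on_strongly_convex[OF assms(2,3-6,8), folded z2_def]
  have "\<tau> * (norm (z1 - z2))\<^sup>2 \<le> (G z1 - F z1) - (G z2 - F z2)"
    using F_min(2)[OF G_min(1)] G_min(2)[OF F_min(1)] by (simp add: norm_minus_commute)
  also have "\<dots> = v \<bullet> (z1 - z2)" by (simp add: diff inner_diff_right)
  also have "\<dots> \<le> norm v * norm (z1 - z2)"
    using Cauchy_Schwarz_ineq2[of v "z1 - z2"] by linarith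
  finally show ?thesis
    using le_divide_of_square_le[of "norm (z1 - z2)" \<tau> "norm v"] \<open>0 < \<tau>\<close>
    by (simp add: z1_def z2_def)
qed

lemma convex_on_gradient_ineq:
  fixes g :: "'a::real_inner \<Rightarrow> real"
  assumes "convex_on S g" and "x \<in> S" "z \<in> S"
    and deriv: "(g has_derivative (\<lambda>h. D \<bullet> h)) (at x)"
  shows "g x + D \<bullet> (z - x) \<le> g z"
proof -
  define \<phi> where "\<phi> = (\<lambda>s::real. g (x + s *\<^sub>R (z - x)))"
  have "((\<lambda>s::real. x + s *\<^sub>R (z - x)) has_derivative (\<lambda>s. s *\<^sub>R (z - x))) (at 0)"
    by (auto intro!: derivative_eq_intros)
  moreover have "(g has_derivative (\<lambda>h. D \<bullet> h)) (at ((\<lambda>s::real. x + s *\<^sub>R (z - x)) 0))"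
    using deriv by simp
  ultimately have "(g \<circ> (\<lambda>s. x + s *\<^sub>R (z - x)) has_derivative (\<lambda>h. D \<bullet> h) \<circ> (\<lambda>s. s *\<^sub>R (z - x))) (at 0)"
    by (rule diff_chain_at)
  then have "(\<phi> has_derivative (\<lambda>s. s * (D \<bullet> (z - x)))) (at 0)"
    by (simp add: \<phi>_def comp_def)
  moreover have "(\<lambda>s. s * (D \<bullet> (z - x))) = (*) (D \<bullet> (z - x))"
    by (simp add: fun_eq_iff)
  ultimately have "(\<phi> has_field_derivative (D \<bullet> (z - x))) (at 0)"
    by (simp add: has_field_derivative_def)
  then have "((\<lambda>s. (\<phi> s - \<phi> 0) / s) \<longlongrightarrow> D \<bullet> (z - x)) (at_right 0)"
    unfolding has_field_derivative_iff by (auto intro: tendsto_mono[OF at_le])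
  moreover have "\<forall>\<^sub>F s in at_right 0. (\<phi> s - \<phi> 0) / s \<le> g z - g x"
  proof (rule eventually_mono[OF eventually_at_right_real[of 0 1]])
    fix s :: real assume s: "s \<in> {0<..<1}"
    have "\<phi> s = g ((1 - s) *\<^sub>R x + s *\<^sub>R z)" by (simp add: \<phi>_def algebra_simps)
    also have "\<dots> \<le> (1 - s) * g x + s * g z"
      using convex_onD[OF assms(1), of s x z] s \<open>x \<in> S\<close> \<open>z \<in> S\<close> by simp
    finally have "\<phi> s - \<phi> 0 \<le> s * (g z - g x)" by (simp add: \<phi>_def algebra_simps)
    then show "(\<phi> s - \<phi> 0) / s \<le> g z - g x"
      using s by (simp add: divide_le_eq mult.commute)
  qed simp
  ultimately have "D \<bullet> (z - x) \<le> g z - g x"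
    by (rule tendsto_upperbound) simp
  then show ?thesis by simp
qed

lemma graph_point_not_in_rel_interior_epigraph:
  fixes r :: "'a::euclidean_space \<Rightarrow> real"
  shows "(x, r x) \<notin> rel_interior (epigraph UNIV r)"
proof
  let ?Ep = "epigraph UNIV r"
  assume "(x, r x) \<in> rel_interior ?Ep"
  then obtain T where T: "open T" "(x, r x) \<in> T" "T \<inter> affine hull ?Ep \<subseteq> ?Ep"
    unfolding mem_rel_interior by blast
  obtain e where "e > 0" "ball (x, r x) e \<subseteq> T" using T(1,2) open_contains_ball by blast
  define q where "q = (x, r x - e/2)"
  have "(x, r x) \<in> ?Ep" "(x, r x + e/2) \<in> ?Ep"
    using \<open>e > 0\<close> by (simp_all add: mem_epigraph)
  then have "(x, r x) \<in> affine hull ?Ep" "(x, r x + e/2) \<in> affine hull ?Ep"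
    by (simp_all add: hull_inc)
  then have "(2::real) *\<^sub>R (x, r x) + (-1) *\<^sub>R (x, r x + e/2) \<in> affine hull ?Ep"
    by (intro mem_affine[OF affine_affine_hull]) simp_all
  moreover have "(2::real) *\<^sub>R (x, r x) + (-1) *\<^sub>R (x, r x + e/2) = q"
    by (simp add: q_def algebra_simps, simp add: scaleR_2)
  moreover have "q \<in> T" using \<open>e > 0\<close> \<open>ball (x, r x) e \<subseteq> T\<close>
    by (auto simp: q_def dist_Pair_Pair dist_real_def)
  ultimately have "q \<in> ?Ep" using T(3) by blast
  then show False using \<open>e > 0\<close> by (simp add: q_def mem_epigraph)
qed

lemma convex_on_UNIV_has_subgradient:
  fixes r :: "'a::euclidean_space \<Rightarrow> real"
  assumes "convex_on UNIV r"
  obtains v where "is_subgradient r x v"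
proof -
  let ?Ep = "epigraph UNIV r"
  have "(x, r x) \<in> closure ?Ep"
    using closure_subset by (fastforce simp: mem_epigraph)
  then obtain a where "a \<noteq> 0" and a: "\<And>y. y \<in> closure ?Ep \<Longrightarrow> a \<bullet> (x, r x) \<le> a \<bullet> y"
    using supporting_hyperplane_relative_frontier[OF convex_epigraphI[OF assms] _
        graph_point_not_in_rel_interior_epigraph] by metis
  obtain a1 a0 where a10: "a = (a1, a0)" by fastforce
  have above: "a1 \<bullet> x + a0 * r x \<le> a1 \<bullet> y + a0 * s" if "r y \<le> s" for y s
  proof -
    have "(y, s) \<in> closure ?Ep" using that closure_subset by (fastforce simp: mem_epigraph)
    then show ?thesis using a by (fastforce simp: a10)
  qed
  have "a0 \<noteq> 0"
  proof
    assume "a0 = 0"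
    then have "a1 \<bullet> a1 \<le> 0" using above[of "x - a1" "r (x - a1)"] by (simp add: inner_diff_right)
    then have "a1 = 0" using inner_gt_zero_iff[of a1] by linarith
    then show False using \<open>a \<noteq> 0\<close> \<open>a0 = 0\<close> by (simp add: a10 zero_prod_def)
  qed
  moreover have "a0 \<ge> 0" using above[of x "r x + 1"] by (simp add: algebra_simps)
  ultimately have "a0 > 0" by simp
  have "is_subgradient r x (- (1 / a0) *\<^sub>R a1)" unfolding is_subgradient_def
  proof
    fix w
    have "a0 * (r x - r w) \<le> a1 \<bullet> (w - x)"
      using above[of w "r w"] by (simp add: algebra_simps inner_diff_right)
    then show "r x + (- (1 / a0) *\<^sub>R a1) \<bullet> (w - x) \<le> r w"
      using \<open>a0 > 0\<close> by (simp add: field_simps)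
  qed
  then show ?thesis using that by blast
qed

section \<open>Products of stochastic weight matrices\<close>

text \<open>\<open>weight_prod a s n\<close> is the matrix product \<open>a (s + n - 1) \<cdots> a s\<close>.\<close>
fun weight_prod :: "(nat \<Rightarrow> 'n::finite \<Rightarrow> 'n \<Rightarrow> real) \<Rightarrow> nat \<Rightarrow> nat \<Rightarrow> 'n \<Rightarrow> 'n \<Rightarrow> real" where
  "weight_prod a s 0 j k = (if j = k then 1 else 0)"
| "weight_prod a s (Suc n) j k = (\<Sum>m\<in>UNIV. a (s + n) j m * weight_prod a s n m k)"

lemma sum_scaleR_sum_swap:
  fixes v :: "'n::finite \<Rightarrow> 'a::real_vector"
  shows "(\<Sum>m\<in>UNIV. a m *\<^sub>R (\<Sum>k\<in>UNIV. P m k *\<^sub>R v k)) = (\<Sum>k\<in>UNIV. (\<Sum>m\<in>UNIV. a m * P m k) *\<^sub>R v k)"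
proof -
  have "(\<Sum>m\<in>UNIV. a m *\<^sub>R (\<Sum>k\<in>UNIV. P m k *\<^sub>R v k)) = (\<Sum>m\<in>UNIV. \<Sum>k\<in>UNIV. (a m * P m k) *\<^sub>R v k)"
    by (simp add: scaleR_sum_right)
  also have "\<dots> = (\<Sum>k\<in>UNIV. \<Sum>m\<in>UNIV. (a m * P m k) *\<^sub>R v k)"
    by (rule sum.swap)
  finally show ?thesis by (simp add: scaleR_sum_left)
qed

lemma weight_prod_nonneg:
  assumes "\<And>t j k. 0 \<le> a t j k"
  shows "0 \<le> weight_prod a s n j k"
  by (induction n arbitrary: j k) (auto intro!: sum_nonneg mult_nonneg_nonneg assms)

lemma weight_prod_row_sum:
  assumes "\<And>t j. (\<Sum>k\<in>UNIV. a t j k) = 1"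
  shows "(\<Sum>k\<in>UNIV. weight_prod a s n j k) = 1"
proof (induction n arbitrary: j)
  case (Suc n)
  have "(\<Sum>k\<in>UNIV. weight_prod a s (Suc n) j k)
      = (\<Sum>m\<in>UNIV. a (s + n) j m * (\<Sum>k\<in>UNIV. weight_prod a s n m k * 1))"
    using sum_scaleR_sum_swap[of "a (s + n) j" "weight_prod a s n" "\<lambda>_. 1::real"] by simp
  then show ?case using Suc assms by simp
qed simp

lemma sum_delta_scaleR:
  fixes v :: "'n::finite \<Rightarrow> 'a::real_vector"
  shows "(\<Sum>k\<in>UNIV. (if j = k then 1 else 0) *\<^sub>R v k) = v j"
proof -
  have "(\<Sum>k\<in>UNIV. (if j = k then 1 else 0) *\<^sub>R v k) = (\<Sum>k\<in>UNIV. if j = k then v k else 0)"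
    by (rule sum.cong) auto
  then show ?thesis by simp
qed

lemma weight_prod_iterate:
  fixes v :: "nat \<Rightarrow> 'n::finite \<Rightarrow> 'a::real_vector"
  assumes "\<And>t j. v (Suc t) j = (\<Sum>k\<in>UNIV. a t j k *\<^sub>R v t k)"
  shows "v (s + n) j = (\<Sum>k\<in>UNIV. weight_prod a s n j k *\<^sub>R v s k)"
proof (induction n arbitrary: j)
  case (Suc n)
  then show ?case by (simp add: assms sum_scaleR_sum_swap)
qed (simp add: sum_delta_scaleR)

lemma weight_prod_perturbed:
  fixes v :: "nat \<Rightarrow> 'n::finite \<Rightarrow> 'a::real_normed_vector"
  assumes nonneg: "\<And>t j k. 0 \<le> a t j k" and rows: "\<And>t j. (\<Sum>k\<in>UNIV. a t j k) = 1"
    and dyn: "\<And>t j. norm (v (Suc t) j - (\<Sum>k\<in>UNIV. a t j k *\<^sub>R v t k)) \<le> \<epsilon> t"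
  shows "norm (v (s + n) j - (\<Sum>k\<in>UNIV. weight_prod a s n j k *\<^sub>R v s k)) \<le> (\<Sum>q<n. \<epsilon> (s + q))"
proof (induction n arbitrary: j)
  case (Suc n)
  define R where "R m = v (s + n) m - (\<Sum>k\<in>UNIV. weight_prod a s n m k *\<^sub>R v s k)" for m
  have "(\<Sum>m\<in>UNIV. a (s + n) j m *\<^sub>R v (s + n) m)
      = (\<Sum>k\<in>UNIV. weight_prod a s (Suc n) j k *\<^sub>R v s k) + (\<Sum>m\<in>UNIV. a (s + n) j m *\<^sub>R R m)"
    by (simp add: R_def scaleR_diff_right sum_subtractf sum_scaleR_sum_swap)
  moreover have "norm (\<Sum>m\<in>UNIV. a (s + n) j m *\<^sub>R R m) \<le> (\<Sum>m\<in>UNIV. a (s + n) j m * (\<Sum>q<n. \<epsilon> (s + q)))"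
    using Suc.IH nonneg
    by (intro order_trans[OF norm_sum] sum_mono) (simp add: R_def mult_left_mono)
  moreover have "(\<Sum>m\<in>UNIV. a (s + n) j m * (\<Sum>q<n. \<epsilon> (s + q))) = (\<Sum>q<n. \<epsilon> (s + q))"
    using rows by (simp flip: sum_distrib_right)
  moreover note dyn[of "s + n" j]
  ultimately show ?case
    using norm_triangle_ineq[of "v (s + Suc n) j - (\<Sum>m\<in>UNIV. a (s + n) j m *\<^sub>R v (s + n) m)"
        "\<Sum>m\<in>UNIV. a (s + n) j m *\<^sub>R R m"]
    by simp
qed (simp add: sum_delta_scaleR)

locale connected_weights =
  fixes a :: "nat \<Rightarrow> 'n::finite \<Rightarrow> 'n \<Rightarrow> real" and active :: "nat \<Rightarrow> ('n \<times> 'n) set"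
    and c :: real and E :: "('n \<times> 'n) set" and T :: nat
  assumes nonneg: "\<And>t j k. 0 \<le> a t j k"
    and active_ge: "\<And>t k j. (k, j) \<in> active t \<Longrightarrow> c \<le> a t j k"
    and active_loops: "\<And>t j. (j, j) \<in> active t"
    and c_pos: "0 < c"
    and edges_active: "\<And>s k j. (k, j) \<in> E \<Longrightarrow> \<exists>q<T. (k, j) \<in> active (s + q)"
    and strongly_connected: "\<And>j k. (j, k) \<in> E\<^sup>*"
begin

lemma weight_prod_pow_ge_Suc:
  assumes "c ^ n \<le> weight_prod a s n m k" and "(m, j) \<in> active (s + n)"
  shows "c ^ Suc n \<le> weight_prod a s (Suc n) j k"
proof -
  have "c ^ Suc n \<le> a (s + n) j m * weight_prod a s n m k"
    using assms active_ge c_pos by (simp add: mult_mono less_imp_le nonneg)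
  also have "\<dots> \<le> (\<Sum>m'\<in>UNIV. a (s + n) j m' * weight_prod a s n m' k)"
    by (rule member_le_sum) (auto intro: mult_nonneg_nonneg nonneg weight_prod_nonneg)
  finally show ?thesis by simp
qed

lemma weight_prod_pow_ge_mono:
  assumes "c ^ n \<le> weight_prod a s n j k" and "n \<le> n'"
  shows "c ^ n' \<le> weight_prod a s n' j k"
  using \<open>n \<le> n'\<close> by (induction n' rule: dec_induct) (use assms weight_prod_pow_ge_Suc active_loops in blast)+

lemma weight_prod_pow_ge_relpow:
  "(k, j) \<in> E ^^ n \<Longrightarrow> c ^ (n * T) \<le> weight_prod a s (n * T) j k"
proof (induction n arbitrary: j)
  case (Suc n)
  then obtain m where "(k, m) \<in> E ^^ n" and "(m, j) \<in> E" by (auto elim: relpow_Suc_E)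
  obtain q where "q < T" and q: "(m, j) \<in> active (s + n * T + q)"
    using edges_active[OF \<open>(m, j) \<in> E\<close>] by (metis add.assoc)
  have "c ^ (n * T + q) \<le> weight_prod a s (n * T + q) m k"
    using Suc.IH[OF \<open>(k, m) \<in> E ^^ n\<close>] by (rule weight_prod_pow_ge_mono) simp
  then have "c ^ Suc (n * T + q) \<le> weight_prod a s (Suc (n * T + q)) j k"
    using q by (intro weight_prod_pow_ge_Suc) (simp_all add: add.assoc)
  then show ?case by (rule weight_prod_pow_ge_mono) (use \<open>q < T\<close> in simp)
qed simp

lemma weight_prod_lower_bound: "c ^ (card E * T) \<le> weight_prod a s (card E * T) j k"
proof -
  have "(k, j) \<in> E\<^sup>*" by (rule strongly_connected)
  then obtain n where "n \<le> card E" "(k, j) \<in> E ^^ n"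
    using rtrancl_finite_eq_relpow[of E] by auto
  then show ?thesis
    by (intro weight_prod_pow_ge_mono[OF weight_prod_pow_ge_relpow]) auto
qed

end

section \<open>Perturbed consensus\<close>

definition spread :: "('n::finite \<Rightarrow> 'a::real_normed_vector) \<Rightarrow> real" where
  "spread u = Max ((\<lambda>(j, k). norm (u j - u k)) ` UNIV)"

lemma norm_diff_le_spread: "norm (u j - u k) \<le> spread u"
  unfolding spread_def by (rule Max_ge) (auto intro: image_eqI[where x="(j, k)"])

lemma spread_nonneg: "0 \<le> spread u"
  using norm_diff_le_spread[of u undefined undefined] by simp

lemma spread_le: "(\<And>j k. norm (u j - u k) \<le> D) \<Longrightarrow> spread u \<le> D"
  unfolding spread_def by (subst Max_le_iff) auto

lemma sum_off_diagonal_products: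
  fixes p q :: "'n::finite \<Rightarrow> real"
  assumes "sum p UNIV = 1" "sum q UNIV = 1"
  shows "(\<Sum>k\<in>UNIV. \<Sum>m\<in>UNIV. p k * q m * (if k = m then 0 else D)) = D * (1 - (\<Sum>k\<in>UNIV. p k * q k))"
proof -
  have "(\<Sum>k\<in>UNIV. \<Sum>m\<in>UNIV. p k * q m * (if k = m then 0 else D))
      = (\<Sum>k\<in>UNIV. \<Sum>m\<in>UNIV. D * (p k * q m) - (if k = m then D * (p k * q k) else 0))"
    by (intro sum.cong) (auto simp: algebra_simps)
  also have "\<dots> = (\<Sum>k\<in>UNIV. \<Sum>m\<in>UNIV. D * (p k * q m)) - D * (\<Sum>k\<in>UNIV. p k * q k)"
    by (simp add: sum_subtractf sum_distrib_left)
  also have "(\<Sum>k\<in>UNIV. \<Sum>m\<in>UNIV. D * (p k * q m)) = D"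
    using assms by (simp flip: sum_distrib_left)
  finally show ?thesis by (simp add: algebra_simps)
qed

lemma norm_weighted_sum_diff_le:
  fixes p q :: "'n::finite \<Rightarrow> real" and u :: "'n \<Rightarrow> 'a::real_normed_vector"
  assumes p_ge: "\<And>k. C \<le> p k" and "0 \<le> C" and q_nonneg: "\<And>k. 0 \<le> q k"
    and sums: "sum p UNIV = 1" "sum q UNIV = 1"
    and D: "\<And>k m. norm (u k - u m) \<le> D"
  shows "norm ((\<Sum>k\<in>UNIV. p k *\<^sub>R u k) - (\<Sum>k\<in>UNIV. q k *\<^sub>R u k)) \<le> (1 - C) * D"
proof -
  have p_nonneg: "0 \<le> p k" for k using p_ge[of k] \<open>0 \<le> C\<close> by linarith
  have "0 \<le> D" using D[of undefined undefined] by simp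
  have "(\<Sum>k\<in>UNIV. p k *\<^sub>R u k) - (\<Sum>k\<in>UNIV. q k *\<^sub>R u k)
      = (\<Sum>k\<in>UNIV. \<Sum>m\<in>UNIV. (p k * q m) *\<^sub>R (u k - u m))"
    using sums
    by (simp add: scaleR_diff_right sum_subtractf scaleR_sum_right[symmetric] scaleR_sum_left[symmetric]
        sum.swap[of "\<lambda>k m. (p k * q m) *\<^sub>R u m"] flip: scaleR_scaleR)
  also have "norm \<dots> \<le> (\<Sum>k\<in>UNIV. \<Sum>m\<in>UNIV. p k * q m * (if k = m then 0 else D))"
    using p_nonneg q_nonneg D
    by (intro order_trans[OF norm_sum] sum_mono order_trans[OF norm_sum]) (simp add: mult_left_mono)
  also have "\<dots> = D * (1 - (\<Sum>k\<in>UNIV. p k * q k))"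
    by (rule sum_off_diagonal_products[OF sums])
  also have "\<dots> \<le> D * (1 - C)"
  proof -
    have "C = (\<Sum>k\<in>UNIV. C * q k)" using sums by (simp flip: sum_distrib_left)
    also have "\<dots> \<le> (\<Sum>k\<in>UNIV. p k * q k)" using p_ge q_nonneg by (simp add: sum_mono mult_right_mono)
    finally show ?thesis using \<open>0 \<le> D\<close> by (simp add: mult_left_mono)
  qed
  finally show ?thesis by (simp add: mult.commute)
qed

lemma norm_sub_weighted_sum_le_spread:
  fixes p :: "'n::finite \<Rightarrow> real" and u :: "'n \<Rightarrow> 'a::real_normed_vector"
  assumes "\<And>k. 0 \<le> p k" and "sum p UNIV = 1"
  shows "norm (u j - (\<Sum>k\<in>UNIV. p k *\<^sub>R u k)) \<le> spread u"
proof -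
  have "norm ((\<Sum>k\<in>UNIV. (if j = k then 1 else 0) *\<^sub>R u k) - (\<Sum>k\<in>UNIV. p k *\<^sub>R u k)) \<le> (1 - 0) * spread u"
    by (rule norm_weighted_sum_diff_le) (use assms norm_diff_le_spread in auto)
  then show ?thesis by (simp add: sum_delta_scaleR)
qed

lemma norm_vec_le_sum_norm: "norm (x :: 'a::real_normed_vector ^ 'b::finite) \<le> (\<Sum>l\<in>UNIV. norm (x $ l))"
  unfolding norm_vec_def by (rule L2_set_le_sum) simp

locale ergodic_weights =
  fixes W :: "nat \<Rightarrow> 'n::finite \<Rightarrow> 'n \<Rightarrow> real" and M :: nat and C :: real
  assumes nonneg: "\<And>t j k. 0 \<le> W t j k"
    and row_sum: "\<And>t j. (\<Sum>k\<in>UNIV. W t j k) = 1"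
    and weight_prod_ge: "\<And>s j k. C \<le> weight_prod W s M j k"
    and C_pos: "0 < C" and M_pos: "0 < M"
begin

lemma C_le_1: "C \<le> 1"
proof -
  have "C \<le> weight_prod W 0 M undefined undefined" by (rule weight_prod_ge)
  also have "\<dots> \<le> (\<Sum>k\<in>UNIV. weight_prod W 0 M undefined k)"
    by (rule member_le_sum) (auto intro: weight_prod_nonneg nonneg)
  finally show ?thesis by (simp add: weight_prod_row_sum[OF row_sum])
qed

context
  fixes v :: "nat \<Rightarrow> 'n \<Rightarrow> 'a::real_normed_vector" and \<epsilon> :: "nat \<Rightarrow> real"
  assumes dyn: "\<And>t j. norm (v (Suc t) j - (\<Sum>k\<in>UNIV. W t j k *\<^sub>R v t k)) \<le> \<epsilon> t"
begin

lemma perturbation_nonneg: "0 \<le> \<epsilon> t"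
  using dyn[of t undefined] norm_ge_zero order_trans by blast

lemma spread_weight_prod_le:
  assumes "0 \<le> C'" and "\<And>j k. C' \<le> weight_prod W s n j k"
  shows "spread (v (s + n)) \<le> (1 - C') * spread (v s) + 2 * (\<Sum>q<n. \<epsilon> (s + q))"
proof (rule spread_le)
  fix j k
  let ?avg = "\<lambda>j. \<Sum>m\<in>UNIV. weight_prod W s n j m *\<^sub>R v s m"
  have "norm (v (s + n) j - ?avg j) \<le> (\<Sum>q<n. \<epsilon> (s + q))"
    and "norm (v (s + n) k - ?avg k) \<le> (\<Sum>q<n. \<epsilon> (s + q))"
    by (rule weight_prod_perturbed[where a=W and v=v and \<epsilon>=\<epsilon>, OF nonneg row_sum dyn])+
  moreover have "norm (?avg j - ?avg k) \<le> (1 - C') * spread (v s)"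
    by (rule norm_weighted_sum_diff_le[OF assms(2,1) weight_prod_nonneg[OF nonneg]
          weight_prod_row_sum[OF row_sum] weight_prod_row_sum[OF row_sum] norm_diff_le_spread])
  ultimately have "norm (v (s + n) j - v (s + n) k)
      \<le> (\<Sum>q<n. \<epsilon> (s + q)) + ((1 - C') * spread (v s) + (\<Sum>q<n. \<epsilon> (s + q)))"
    by (intro norm_diff_triangle_le[of _ "?avg j"] norm_diff_triangle_le[of _ "?avg k"])
      (simp_all add: norm_minus_commute)
  then show "norm (v (s + n) j - v (s + n) k) \<le> (1 - C') * spread (v s) + 2 * (\<Sum>q<n. \<epsilon> (s + q))"
    by simp
qed

lemma sum_perturbation_le:
  fixes \<delta> :: real
  assumes "\<And>t. ts \<le> t \<Longrightarrow> \<epsilon> t \<le> \<delta>" "ts \<le> s" "n \<le> M"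
  shows "(\<Sum>q<n. \<epsilon> (s + q)) \<le> M * \<delta>"
proof -
  have "(\<Sum>q<n. \<epsilon> (s + q)) \<le> n * \<delta>"
    using sum_mono[of "{..<n}" "\<lambda>q. \<epsilon> (s + q)" "\<lambda>_. \<delta>"] assms(1,2) by simp
  also have "\<dots> \<le> M * \<delta>"
    using assms(1)[of ts] perturbation_nonneg[of ts] \<open>n \<le> M\<close> by (intro mult_right_mono) auto
  finally show ?thesis .
qed

text \<open>Every block of \<open>M\<close> steps contracts the spread by \<open>1 - C\<close>, up to the accumulated
  perturbation \<open>2 M \<delta>\<close>; summing the geometric series gives the offset \<open>2 M \<delta> / C\<close>.\<close>
lemma spread_geometric_bound:
  fixes \<delta> :: real
  assumes small: "\<And>t. ts \<le> t \<Longrightarrow> \<epsilon> t \<le> \<delta>" and "ts \<le> t"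
  shows "spread (v t) \<le> (1 - C) ^ ((t - ts) div M) * (spread (v ts) + 2 * M * \<delta>) + 2 * M * \<delta> / C"
  using \<open>ts \<le> t\<close>
proof (induction t rule: less_induct)
  case (less t)
  have "0 \<le> \<delta>" using small[of ts] perturbation_nonneg[of ts] by simp
  then have offset_nonneg: "0 \<le> 2 * M * \<delta> / C" using C_pos by simp
  show ?case
  proof (cases "t < ts + M")
    case True
    define n where "n = t - ts"
    have n: "t = ts + n" "n < M" using True less.prems by (simp_all add: n_def)
    have "spread (v (ts + n)) \<le> (1 - 0) * spread (v ts) + 2 * (\<Sum>q<n. \<epsilon> (ts + q))"
      by (rule spread_weight_prod_le) (simp_all add: weight_prod_nonneg nonneg)
    also have "\<dots> \<le> spread (v ts) + 2 * (M * \<delta>)"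
      using sum_perturbation_le[OF small order_refl less_imp_le[OF n(2)]] by simp
    finally show ?thesis using offset_nonneg n by simp
  next
    case False
    define t' where "t' = t - M"
    have t': "t = t' + M" "ts \<le> t'" "t' < t" using False M_pos by (auto simp: t'_def)
    have "t - ts = (t' - ts) + M" using t' by simp
    then have div: "(t - ts) div M = Suc ((t' - ts) div M)" using M_pos by simp
    have "spread (v t) \<le> (1 - C) * spread (v t') + 2 * (\<Sum>q<M. \<epsilon> (t' + q))"
      unfolding t'(1) by (rule spread_weight_prod_le) (use C_pos weight_prod_ge in \<open>simp_all add: less_imp_le\<close>)
    also have "\<dots> \<le> (1 - C) * spread (v t') + 2 * (M * \<delta>)"
      using sum_perturbation_le[OF small t'(2) order_refl] by simp
    also have "\<dots> \<le> (1 - C) * ((1 - C) ^ ((t' - ts) div M) * (spread (v ts) + 2 * M * \<delta>) + 2 * M * \<delta> / C)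
        + 2 * (M * \<delta>)"
      using less.IH[OF t'(3,2)] C_le_1 by (intro add_right_mono mult_left_mono) auto
    also have "\<dots> = (1 - C) ^ ((t - ts) div M) * (spread (v ts) + 2 * M * \<delta>) + 2 * M * \<delta> / C"
      using C_pos by (simp add: div field_simps)
    finally show ?thesis .
  qed
qed

lemma spread_bounded:
  fixes \<delta> :: real
  assumes "\<And>t. \<epsilon> t \<le> \<delta>"
  shows "spread (v t) \<le> spread (v 0) + 2 * M * \<delta> + 2 * M * \<delta> / C"
proof -
  have "(1 - C) ^ (t div M) * (spread (v 0) + 2 * M * \<delta>) \<le> spread (v 0) + 2 * M * \<delta>"
    using C_pos C_le_1 spread_nonneg[of "v 0"] assms[of 0] perturbation_nonneg[of 0]
    by (intro mult_left_le_one_le power_le_one) auto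
  then show ?thesis using spread_geometric_bound[of 0 \<delta> t] assms by simp
qed

lemma spread_tendsto_zero:
  assumes "\<epsilon> \<longlonglongrightarrow> 0"
  shows "(\<lambda>t. spread (v t)) \<longlonglongrightarrow> 0"
proof (rule LIMSEQ_I)
  fix e :: real assume "0 < e"
  define \<delta> where "\<delta> = e * C / (8 * M)"
  have "0 < \<delta>" using \<open>0 < e\<close> C_pos M_pos by (simp add: \<delta>_def)
  then obtain ts where small: "\<And>t. ts \<le> t \<Longrightarrow> \<epsilon> t \<le> \<delta>"
    using LIMSEQ_D[OF assms] by (metis abs_less_iff diff_zero less_eq_real_def real_norm_def)
  define b where "b = spread (v ts) + 2 * M * \<delta>"
  have "0 \<le> b" using spread_nonneg[of "v ts"] \<open>0 < \<delta>\<close> by (simp add: b_def)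
  have "(\<lambda>k. (1 - C) ^ k) \<longlonglongrightarrow> 0" using C_pos C_le_1 by (intro LIMSEQ_power_zero) auto
  then obtain k0 where k0: "\<And>k. k0 \<le> k \<Longrightarrow> (1 - C) ^ k < e / (4 * (b + 1))"
    using LIMSEQ_D[of _ 0 "e / (4 * (b + 1))"] \<open>0 < e\<close> \<open>0 \<le> b\<close> C_le_1
    by (metis abs_of_nonneg diff_ge_0_iff_ge diff_zero divide_pos_pos real_norm_def
        zero_le_power add_nonneg_pos zero_less_one mult_pos_pos zero_less_numeral)
  show "\<exists>t0. \<forall>t\<ge>t0. norm (spread (v t) - 0) < e"
  proof (intro exI allI impI)
    fix t assume "ts + k0 * M \<le> t"
    then have "k0 \<le> (t - ts) div M"
      using M_pos div_le_mono[of "k0 * M" "t - ts" M] by simp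
    then have "(1 - C) ^ ((t - ts) div M) * b \<le> e / (4 * (b + 1)) * b"
      using k0 \<open>0 \<le> b\<close> by (intro mult_right_mono) (auto simp: less_imp_le)
    also have "\<dots> \<le> e / 4"
      using \<open>0 \<le> b\<close> \<open>0 < e\<close> by (simp add: field_simps)
    moreover have "spread (v t) \<le> (1 - C) ^ ((t - ts) div M) * b + 2 * M * \<delta> / C"
      using spread_geometric_bound[OF small] \<open>ts + k0 * M \<le> t\<close> by (simp add: b_def)
    ultimately have "spread (v t) \<le> e / 4 + 2 * M * \<delta> / C" by linarith
    also have "2 * M * \<delta> / C = e / 4" using C_pos M_pos by (simp add: \<delta>_def field_simps)
    finally show "norm (spread (v t) - 0) < e" using spread_nonneg[of "v t"] \<open>0 < e\<close> by simp
  qed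
qed

end

end

section \<open>The push-sum network\<close>

locale push_sum_network =
  fixes E :: "('n::finite \<times> 'n) set" and sel :: "'n \<Rightarrow> nat \<Rightarrow> 'b::finite"
    and A :: "'b \<Rightarrow> nat \<Rightarrow> 'n \<Rightarrow> 'n \<Rightarrow> real" and \<kappa> :: real
    and \<Phi> :: "nat \<Rightarrow> 'n \<Rightarrow> 'b \<Rightarrow> real"
  assumes E_strong: "\<And>j k. (j, k) \<in> E\<^sup>*"
    and E_loops: "\<And>j. (j, j) \<in> E"
    and sel_cover: "\<And>j. \<exists>T>0. \<forall>t. (\<Union>s<T. {sel j (t + s)}) = UNIV"
    and \<kappa>_pos: "\<kappa> > 0"
    and A_pos: "\<And>l t j k. (k, j) \<in> edges_blk E sel l t \<Longrightarrow> A l t j k > \<kappa>"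
    and A_zero: "\<And>l t j k. (k, j) \<notin> edges_blk E sel l t \<Longrightarrow> A l t j k = 0"
    and A_colstoch: "\<And>l t k. (\<Sum>j\<in>UNIV. A l t j k) = 1"
    and \<Phi>0: "\<And>j l. \<Phi> 0 j l = 1"
    and \<Phi>_upd: "\<And>t j l. \<Phi> (Suc t) j l = (\<Sum>k\<in>nbrs_blk E sel j l t. A l t j k * \<Phi> t k l)"
begin

lemma sum_nbrs_blk_eq_sum_UNIV:
  assumes "\<And>k. A l t j k = 0 \<Longrightarrow> g k = 0"
  shows "(\<Sum>k\<in>nbrs_blk E sel j l t. g k) = (\<Sum>k\<in>UNIV. g k)"
proof (rule sum.mono_neutral_left)
  show "\<forall>k\<in>UNIV - nbrs_blk E sel j l t. g k = 0"
    using A_zero assms by (auto simp: edges_blk_def)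
qed simp_all

lemma A_nonneg: "0 \<le> A l t j k"
proof (cases "(k, j) \<in> edges_blk E sel l t")
  case True
  then show ?thesis using A_pos[OF True] \<kappa>_pos by simp
qed (simp add: A_zero)

lemma edges_blk_loop: "(j, j) \<in> edges_blk E sel l t"
  using E_loops by (simp add: edges_blk_def nbrs_blk_def)

lemma A_le_1: "A l t j k \<le> 1"
  using member_le_sum[of j UNIV "\<lambda>j. A l t j k"] A_nonneg A_colstoch[of l t k] by simp

lemma \<kappa>_less_1: "\<kappa> < 1"
  using A_pos[OF edges_blk_loop, of l t j] A_le_1[of l t j j] by simp

lemma selection_window:
  obtains T where "\<And>j s l. \<exists>q<T. sel j (s + q) = l"
proof -
  obtain Tj where Tj: "\<And>j t. (\<Union>s<Tj j. {sel j (t + s)}) = UNIV"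
    using sel_cover by metis
  have "\<exists>q<(\<Sum>j\<in>UNIV. Tj j). sel j (s + q) = l" for j s l
  proof -
    have "l \<in> (\<Union>q<Tj j. {sel j (s + q)})" using Tj by blast
    then obtain q where "q < Tj j" "sel j (s + q) = l" by blast
    moreover have "Tj j \<le> (\<Sum>j\<in>UNIV. Tj j)" by (rule member_le_sum) auto
    ultimately show ?thesis by (intro exI[of _ q]) auto
  qed
  then show ?thesis using that by blast
qed

lemma connected_weights_edges_blk:
  assumes window: "\<And>j s l. \<exists>q<T. sel j (s + q) = l"
    and "\<And>t j k. 0 \<le> a t j k" and "\<And>t k j. (k, j) \<in> edges_blk E sel l t \<Longrightarrow> c \<le> a t j k"
    and "0 < c"
  shows "connected_weights a (edges_blk E sel l) c E T"
proof
  fix s k j assume "(k, j) \<in> E"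
  obtain q where "q < T" "sel k (s + q) = l" using window by blast
  with \<open>(k, j) \<in> E\<close> show "\<exists>q<T. (k, j) \<in> edges_blk E sel l (s + q)"
    by (auto simp: edges_blk_def nbrs_blk_def in_nbrs_def)
qed (simp_all add: assms E_strong edges_blk_loop)

lemma \<Phi>_upd_UNIV: "\<Phi> (Suc t) j l = (\<Sum>k\<in>UNIV. A l t j k * \<Phi> t k l)"
  unfolding \<Phi>_upd by (rule sum_nbrs_blk_eq_sum_UNIV) simp

lemma \<Phi>_ge_pow: "\<kappa> ^ t \<le> \<Phi> t j l"
proof (induction t arbitrary: j)
  case (Suc t)
  have "0 \<le> \<Phi> t k l" for k using Suc[of k] \<kappa>_pos by (meson order_trans zero_le_power less_imp_le)
  then have "A l t j j * \<Phi> t j l \<le> (\<Sum>k\<in>UNIV. A l t j k * \<Phi> t k l)"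
    by (intro member_le_sum) (auto intro: mult_nonneg_nonneg A_nonneg)
  moreover have "\<kappa> * \<kappa> ^ t \<le> A l t j j * \<Phi> t j l"
    using A_pos[OF edges_blk_loop, of l t j] Suc[of j] \<kappa>_pos by (intro mult_mono) auto
  ultimately show ?case by (simp add: \<Phi>_upd_UNIV)
qed (simp add: \<Phi>0)

lemma \<Phi>_pos: "0 < \<Phi> t j l"
  using \<Phi>_ge_pow[of t j l] \<kappa>_pos by (meson less_le_trans zero_less_power)

lemma sum_\<Phi>: "(\<Sum>j\<in>UNIV. \<Phi> t j l) = real CARD('n)"
proof (induction t)
  case (Suc t)
  have "(\<Sum>j\<in>UNIV. \<Phi> (Suc t) j l) = (\<Sum>j\<in>UNIV. \<Sum>k\<in>UNIV. A l t j k * \<Phi> t k l)"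
    by (simp add: \<Phi>_upd_UNIV)
  also have "\<dots> = (\<Sum>k\<in>UNIV. \<Sum>j\<in>UNIV. A l t j k * \<Phi> t k l)" by (rule sum.swap)
  also have "\<dots> = (\<Sum>k\<in>UNIV. \<Phi> t k l)" by (simp add: A_colstoch flip: sum_distrib_right)
  finally show ?case using Suc by simp
qed (simp add: \<Phi>0)

lemma \<Phi>_le_card: "\<Phi> t j l \<le> real CARD('n)"
  using member_le_sum[of j UNIV "\<lambda>j. \<Phi> t j l"] \<Phi>_pos by (simp add: less_imp_le sum_\<Phi>)

lemma \<Phi>_lower_bound:
  obtains \<phi> where "0 < \<phi>" "\<And>t j l. \<phi> \<le> \<Phi> t j l"
proof -
  obtain T where window: "\<And>j s l. \<exists>q<T. sel j (s + q) = l" using selection_window by blast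
  have conn: "connected_weights (A l) (edges_blk E sel l) \<kappa> E T" for l
    by (rule connected_weights_edges_blk[OF window A_nonneg less_imp_le[OF A_pos] \<kappa>_pos])
  define M where "M = card E * T"
  have "\<kappa> ^ M \<le> \<Phi> t j l" for t j l
  proof (cases "t \<le> M")
    case True
    have "\<kappa> ^ M \<le> \<kappa> ^ t" by (rule power_decreasing) (use True \<kappa>_pos \<kappa>_less_1 in auto)
    then show ?thesis using \<Phi>_ge_pow[of t j l] by simp
  next
    case False
    define s where "s = t - M"
    have "t = s + M" using False by (simp add: s_def)
    have "\<Phi> (s + M) j l = (\<Sum>k\<in>UNIV. weight_prod (A l) s M j k *\<^sub>R \<Phi> s k l)"
      by (rule weight_prod_iterate) (simp add: \<Phi>_upd_UNIV)
    also have "\<dots> \<ge> (\<Sum>k\<in>UNIV. \<kappa> ^ M * \<Phi> s k l)"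
      using connected_weights.weight_prod_lower_bound[OF conn] \<Phi>_pos
      by (intro sum_mono) (simp add: M_def mult_right_mono less_imp_le)
    finally have "\<kappa> ^ M * real CARD('n) \<le> \<Phi> t j l"
      by (simp add: \<open>t = s + M\<close> sum_\<Phi> flip: sum_distrib_left)
    moreover have "\<kappa> ^ M \<le> \<kappa> ^ M * real CARD('n)"
      using \<kappa>_pos by simp
    ultimately show ?thesis by linarith
  qed
  then show ?thesis using that[of "\<kappa> ^ M"] \<kappa>_pos by simp
qed

text \<open>The weights with which the algorithm averages \<open>X\<close> and \<open>Y\<close>: unlike \<open>A\<close>, they are row stochastic.\<close>
definition mix_weight :: "'b \<Rightarrow> nat \<Rightarrow> 'n \<Rightarrow> 'n \<Rightarrow> real" where
  "mix_weight l t j k = A l t j k * \<Phi> t k l / \<Phi> (Suc t) j l"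

lemma mix_weight_nonneg: "0 \<le> mix_weight l t j k"
  unfolding mix_weight_def using A_nonneg \<Phi>_pos by (simp add: less_imp_le)

lemma mix_weight_row_sum: "(\<Sum>k\<in>UNIV. mix_weight l t j k) = 1"
  using \<Phi>_pos[of "Suc t" j l]
  by (simp add: mix_weight_def \<Phi>_upd_UNIV flip: sum_divide_distrib)

lemma mix_weights_ergodic:
  obtains M C where "\<And>l. ergodic_weights (mix_weight l) M C"
proof -
  obtain \<phi> where "0 < \<phi>" and \<phi>: "\<And>t j l. \<phi> \<le> \<Phi> t j l" using \<Phi>_lower_bound by blast
  define c where "c = \<kappa> * \<phi> / real CARD('n)"
  have "0 < c" using \<kappa>_pos \<open>0 < \<phi>\<close> by (simp add: c_def)
  have edge_ge: "c \<le> mix_weight l t j k" if "(k, j) \<in> edges_blk E sel l t" for l t j k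
  proof -
    have "\<kappa> * \<phi> \<le> A l t j k * \<Phi> t k l"
      using A_pos[OF that] \<phi>[of t k l] \<kappa>_pos \<open>0 < \<phi>\<close> by (intro mult_mono) auto
    then show ?thesis
      unfolding c_def mix_weight_def using \<kappa>_pos \<open>0 < \<phi>\<close> \<Phi>_pos \<Phi>_le_card
      by (intro frac_le) (auto intro: order_trans[of 0 "\<kappa> * \<phi>"])
  qed
  obtain T where window: "\<And>j s l. \<exists>q<T. sel j (s + q) = l" using selection_window by blast
  then have "0 < T" by (metis less_nat_zero_code neq0_conv)
  have "E \<noteq> {}" using E_loops by blast
  then have "0 < card E" by (simp add: card_gt_0_iff)
  have "ergodic_weights (mix_weight l) (card E * T) (c ^ (card E * T))" for l
  proof
    interpret connected_weights "mix_weight l" "edges_blk E sel l" c E T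
      by (rule connected_weights_edges_blk[OF window mix_weight_nonneg edge_ge \<open>0 < c\<close>])
    show "c ^ (card E * T) \<le> weight_prod (mix_weight l) s (card E * T) j k" for s j k
      by (rule weight_prod_lower_bound)
  qed (simp_all add: mix_weight_nonneg mix_weight_row_sum \<open>0 < c\<close> \<open>0 < card E\<close> \<open>0 < T\<close>)
  then show ?thesis using that by blast
qed

end

section \<open>The tracking scheme\<close>

locale tracking_scheme = push_sum_network E sel A \<kappa> \<Phi>
  for E :: "('n::finite \<times> 'n) set" and sel :: "'n \<Rightarrow> nat \<Rightarrow> 'b::finite" and A \<kappa> \<Phi> +
  fixes K :: "'b \<Rightarrow> (real^'d) set"
    and gf :: "'n \<Rightarrow> real^'d^'b \<Rightarrow> real^'d^'b" and Lf :: "'n \<Rightarrow> real"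
    and r :: "'b \<Rightarrow> real^'d \<Rightarrow> real"
    and ft :: "'n \<Rightarrow> 'b \<Rightarrow> real^'d \<Rightarrow> real^'d^'b \<Rightarrow> real"
    and gft :: "'n \<Rightarrow> 'b \<Rightarrow> real^'d \<Rightarrow> real^'d^'b \<Rightarrow> real^'d"
    and \<tau> :: "'n \<Rightarrow> real" and \<gamma> :: "nat \<Rightarrow> real"
    and X Y :: "nat \<Rightarrow> 'n \<Rightarrow> real^'d^'b" and xt :: "nat \<Rightarrow> 'n \<Rightarrow> real^'d"
  assumes K_ne: "\<And>l. K l \<noteq> {}"
    and K_closed: "\<And>l. closed (K l)"
    and K_convex: "\<And>l. convex (K l)"
    and gf_lipschitz: "\<And>j. \<forall>x\<in>prodK K. \<forall>y\<in>prodK K. norm (gf j x - gf j y) \<le> Lf j * norm (x - y)"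
    and gf_bounded: "\<And>j. bounded (gf j ` prodK K)"
    and r_convex: "\<And>l. convex_on UNIV (r l)"
    and r_subgrad_bounded: "\<And>l. \<exists>M. \<forall>z\<in>K l. \<forall>v. is_subgradient (r l) z v \<longrightarrow> norm v \<le> M"
    and \<tau>_pos: "\<And>j. \<tau> j > 0"
    and ft_deriv: "\<And>j l x z. x \<in> prodK K \<Longrightarrow> z \<in> K l \<Longrightarrow>
                     ((\<lambda>u. ft j l u x) has_derivative (\<lambda>h. gft j l z x \<bullet> h)) (at z)"
    and ft_strong: "\<And>j l x. x \<in> prodK K \<Longrightarrow> strongly_convex_on (K l) (\<tau> j) (\<lambda>z. ft j l z x)"
    and ft_grad: "\<And>j l x. x \<in> prodK K \<Longrightarrow> gft j l (x $ l) x = gf j x $ l"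
    and \<gamma>_pos: "\<And>t. 0 < \<gamma> t"
    and \<gamma>_le1: "\<And>t. \<gamma> t \<le> 1"
    and \<gamma>_sq: "summable (\<lambda>t. (\<gamma> t)\<^sup>2)"
    and X0: "\<And>j. X 0 j \<in> prodK K"
    and Y0: "\<And>j. Y 0 j = gf j (X 0 j)"
    and xt_def: "\<And>t j. xt t j = argmin_on (K (sel j t))
                   (\<lambda>z. fhat ft gf j (sel j t) z (X t j) (Y t j $ sel j t) + r (sel j t) z)"
    and X_upd: "\<And>t j l. X (Suc t) j $ l =
                  (\<Sum>k\<in>nbrs_blk E sel j l t. (A l t j k * \<Phi> t k l / \<Phi> (Suc t) j l) *\<^sub>R
                     (X t k $ l + \<gamma> t *\<^sub>R (if l = sel k t then xt t k - X t k $ l else 0)))"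
    and Y_upd: "\<And>t j l. Y (Suc t) j $ l =
                  (\<Sum>k\<in>nbrs_blk E sel j l t. (A l t j k / \<Phi> (Suc t) j l) *\<^sub>R
                     (\<Phi> t k l *\<^sub>R (Y t k $ l) + gf k (X (Suc t) k) $ l - gf k (X t k) $ l))"
begin

definition local_obj :: "'n \<Rightarrow> 'b \<Rightarrow> real^'d^'b \<Rightarrow> real^'d \<Rightarrow> real^'d \<Rightarrow> real" where
  "local_obj j l x g z = fhat ft gf j l z x g + r l z"

lemma xt_eq_argmin: "xt t j = argmin_on (K (sel j t)) (local_obj j (sel j t) (X t j) (Y t j $ sel j t))"
  by (simp add: xt_def local_obj_def[abs_def])

lemma xhat_eq_argmin:
  "xhat ft gf r K i l x = argmin_on (K l) (local_obj i l x ((1 / real CARD('n)) *\<^sub>R (\<Sum>j\<in>UNIV. gf j x $ l)))"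
  by (simp add: xhat_def local_obj_def[abs_def])

lemma local_obj_continuous:
  assumes "x \<in> prodK K"
  shows "continuous_on (K l) (local_obj j l x g)"
proof -
  have "continuous_on (K l) (\<lambda>z. ft j l z x)"
    by (rule continuous_at_imp_continuous_on) (use ft_deriv[OF assms] has_derivative_continuous in blast)
  moreover have "continuous_on (K l) (r l)"
    by (rule continuous_on_subset[OF convex_on_continuous[OF open_UNIV r_convex] subset_UNIV])
  ultimately show ?thesis
    unfolding local_obj_def[abs_def] fhat_def by (intro continuous_intros)
qed

lemma local_obj_strongly_convex:
  assumes "x \<in> prodK K"
  shows "strongly_convex_on (K l) (\<tau> j) (local_obj j l x g)"
  unfolding strongly_convex_on_def
proof (intro ballI allI impI)
  fix u v and \<theta> :: real assume "u \<in> K l" "v \<in> K l" and \<theta>: "0 \<le> \<theta> \<and> \<theta> \<le> 1"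
  define c where "c = real CARD('n) *\<^sub>R g - gf j x $ l"
  have "ft j l (\<theta> *\<^sub>R u + (1 - \<theta>) *\<^sub>R v) x
      \<le> \<theta> * ft j l u x + (1 - \<theta>) * ft j l v x - \<tau> j / 2 * \<theta> * (1 - \<theta>) * (norm (u - v))\<^sup>2"
    using ft_strong[OF assms, of l j] \<open>u \<in> K l\<close> \<open>v \<in> K l\<close> \<theta> unfolding strongly_convex_on_def by blast
  moreover have "c \<bullet> (\<theta> *\<^sub>R u + (1 - \<theta>) *\<^sub>R v - x $ l) = \<theta> * (c \<bullet> (u - x $ l)) + (1 - \<theta>) * (c \<bullet> (v - x $ l))"
    by (simp add: inner_diff_right inner_add_right algebra_simps)
  moreover have "r l (\<theta> *\<^sub>R u + (1 - \<theta>) *\<^sub>R v) \<le> \<theta> * r l u + (1 - \<theta>) * r l v"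
    using convex_onD[OF r_convex, of \<theta> v u] \<theta> by (simp add: add.commute)
  ultimately show "local_obj j l x g (\<theta> *\<^sub>R u + (1 - \<theta>) *\<^sub>R v)
      \<le> \<theta> * local_obj j l x g u + (1 - \<theta>) * local_obj j l x g v - \<tau> j / 2 * \<theta> * (1 - \<theta>) * (norm (u - v))\<^sup>2"
    unfolding local_obj_def fhat_def c_def[symmetric] by (simp add: algebra_simps)
qed

lemma local_argmin_in_K:
  "x \<in> prodK K \<Longrightarrow> argmin_on (K l) (local_obj j l x g) \<in> K l"
  by (rule argmin_on_strongly_convex(1)[OF local_obj_strongly_convex \<tau>_pos K_convex K_closed K_ne
        local_obj_continuous])

text \<open>The best response depends on the gradient estimate \<open>g\<close> only through the linear term
  \<open>N g\<close>, hence Lipschitz with constant \<open>N / \<tau>\<close>.\<close>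
lemma local_argmin_lipschitz:
  assumes "x \<in> prodK K"
  shows "norm (argmin_on (K l) (local_obj j l x g1) - argmin_on (K l) (local_obj j l x g2))
    \<le> real CARD('n) * norm (g1 - g2) / \<tau> j"
proof -
  have "norm (argmin_on (K l) (local_obj j l x g1) - argmin_on (K l) (local_obj j l x g2))
      \<le> norm (real CARD('n) *\<^sub>R (g2 - g1)) / \<tau> j"
    by (rule argmin_on_linear_perturbation[OF local_obj_strongly_convex[OF assms]
          local_obj_strongly_convex[OF assms] \<tau>_pos K_convex K_closed K_ne
          local_obj_continuous[OF assms] local_obj_continuous[OF assms], where w = "x $ l"])
      (simp add: local_obj_def fhat_def algebra_simps inner_diff_left)
  then show ?thesis by (simp add: norm_minus_commute)
qed

lemma r_subgradient_bound:
  obtains M where "\<And>l z v. z \<in> K l \<Longrightarrow> is_subgradient (r l) z v \<Longrightarrow> norm v \<le> M"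
proof -
  obtain Ml where Ml: "\<And>l z v. z \<in> K l \<Longrightarrow> is_subgradient (r l) z v \<Longrightarrow> norm v \<le> Ml l"
    using r_subgrad_bounded by metis
  show ?thesis
  proof (rule that)
    fix l z v assume "z \<in> K l" "is_subgradient (r l) z v"
    moreover have "Ml l \<le> (\<Sum>l\<in>UNIV. \<bar>Ml l\<bar>)"
      using member_le_sum[of l UNIV "\<lambda>l. \<bar>Ml l\<bar>"] by simp
    ultimately show "norm v \<le> (\<Sum>l\<in>UNIV. \<bar>Ml l\<bar>)" using Ml by fastforce
  qed
qed

lemma local_argmin_dist_le:
  assumes "x \<in> prodK K" and M: "\<And>z v. z \<in> K l \<Longrightarrow> is_subgradient (r l) z v \<Longrightarrow> norm v \<le> M"
  shows "norm (argmin_on (K l) (local_obj j l x g) - x $ l) \<le> 2 * (real CARD('n) * norm g + M) / \<tau> j"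
proof -
  have "x $ l \<in> K l" using assms by (simp add: prodK_def)
  obtain s where s: "is_subgradient (r l) (x $ l) s"
    using convex_on_UNIV_has_subgradient[OF r_convex] by blast
  have "convex_on (K l) (\<lambda>z. ft j l z x)"
    using strongly_convex_on_imp_convex_on[OF ft_strong[OF assms(1)] _ K_convex] \<tau>_pos less_imp_le by blast
  then have ft_above: "ft j l (x $ l) x + (gf j x $ l) \<bullet> (z - x $ l) \<le> ft j l z x" if "z \<in> K l" for z
    using convex_on_gradient_ineq[OF _ \<open>x $ l \<in> K l\<close> that ft_deriv[OF assms(1) \<open>x $ l \<in> K l\<close>]]
    by (simp add: ft_grad[OF assms(1)])
  have "norm (argmin_on (K l) (local_obj j l x g) - x $ l) \<le> 2 * norm (real CARD('n) *\<^sub>R g + s) / \<tau> j"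
  proof (rule argmin_on_dist_le[OF local_obj_strongly_convex[OF assms(1)] \<tau>_pos K_convex K_closed
        local_obj_continuous[OF assms(1)] \<open>x $ l \<in> K l\<close>])
    fix z assume "z \<in> K l"
    then have "ft j l (x $ l) x + (gf j x $ l) \<bullet> (z - x $ l) \<le> ft j l z x"
      and "r l (x $ l) + s \<bullet> (z - x $ l) \<le> r l z"
      using ft_above s by (auto simp: is_subgradient_def)
    then show "local_obj j l x g (x $ l) + (real CARD('n) *\<^sub>R g + s) \<bullet> (z - x $ l) \<le> local_obj j l x g z"
      unfolding local_obj_def fhat_def by (simp add: inner_add_left inner_diff_left)
  qed
  also have "\<dots> \<le> 2 * (real CARD('n) * norm g + M) / \<tau> j"
    using norm_triangle_ineq[of "real CARD('n) *\<^sub>R g" s] M[OF \<open>x $ l \<in> K l\<close> s] \<tau>_pos[of j]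
    by (intro divide_right_mono mult_left_mono) auto
  finally show ?thesis .
qed

definition direction :: "nat \<Rightarrow> 'n \<Rightarrow> 'b \<Rightarrow> real^'d" where
  "direction t k l = (if l = sel k t then xt t k - X t k $ l else 0)"

lemma X_upd_mix_weight:
  "X (Suc t) j $ l = (\<Sum>k\<in>UNIV. mix_weight l t j k *\<^sub>R (X t k $ l + \<gamma> t *\<^sub>R direction t k l))"
  unfolding X_upd mix_weight_def direction_def by (rule sum_nbrs_blk_eq_sum_UNIV) simp

lemma X_in_prodK: "X t j \<in> prodK K"
proof (induction t arbitrary: j)
  case (Suc t)
  have "X t k $ l + \<gamma> t *\<^sub>R direction t k l \<in> K l" for k l
  proof (cases "l = sel k t")
    case True
    have "xt t k \<in> K l" using local_argmin_in_K[OF Suc.IH] True by (simp add: xt_eq_argmin)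
    moreover have "X t k $ l \<in> K l" using Suc.IH by (simp add: prodK_def)
    moreover have "X t k $ l + \<gamma> t *\<^sub>R direction t k l = (1 - \<gamma> t) *\<^sub>R X t k $ l + \<gamma> t *\<^sub>R xt t k"
      using True by (simp add: direction_def algebra_simps)
    ultimately show ?thesis
      using convexD[OF K_convex] \<gamma>_pos[of t] \<gamma>_le1[of t] by (simp add: less_imp_le)
  next
    case False
    then show ?thesis using Suc.IH by (simp add: direction_def prodK_def)
  qed
  then have "X (Suc t) j $ l \<in> K l" for l
    unfolding X_upd_mix_weight by (intro convex_sum[OF _ K_convex]) (auto intro: mix_weight_row_sum mix_weight_nonneg)
  then show ?case by (simp add: prodK_def)
qed (rule X0)

definition grad_change :: "nat \<Rightarrow> 'n \<Rightarrow> real^'d^'b" where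
  "grad_change t k = gf k (X (Suc t) k) - gf k (X t k)"

lemma Y_upd_UNIV:
  "Y (Suc t) j $ l = (\<Sum>k\<in>UNIV. (A l t j k / \<Phi> (Suc t) j l) *\<^sub>R (\<Phi> t k l *\<^sub>R Y t k $ l + grad_change t k $ l))"
  unfolding Y_upd grad_change_def by (subst sum_nbrs_blk_eq_sum_UNIV) (auto simp: algebra_simps)

lemma gradient_tracking: "(\<Sum>j\<in>UNIV. \<Phi> t j l *\<^sub>R Y t j $ l) = (\<Sum>j\<in>UNIV. gf j (X t j) $ l)"
proof (induction t)
  case (Suc t)
  have "(\<Sum>j\<in>UNIV. \<Phi> (Suc t) j l *\<^sub>R Y (Suc t) j $ l)
      = (\<Sum>j\<in>UNIV. \<Sum>k\<in>UNIV. A l t j k *\<^sub>R (\<Phi> t k l *\<^sub>R Y t k $ l + grad_change t k $ l))"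
  proof (rule sum.cong[OF refl])
    fix j
    have "\<Phi> (Suc t) j l \<noteq> 0" using \<Phi>_pos[of "Suc t" j l] by simp
    then show "\<Phi> (Suc t) j l *\<^sub>R Y (Suc t) j $ l
        = (\<Sum>k\<in>UNIV. A l t j k *\<^sub>R (\<Phi> t k l *\<^sub>R Y t k $ l + grad_change t k $ l))"
      by (simp add: Y_upd_UNIV scaleR_sum_right)
  qed
  also have "\<dots> = (\<Sum>k\<in>UNIV. \<Sum>j\<in>UNIV. A l t j k *\<^sub>R (\<Phi> t k l *\<^sub>R Y t k $ l + grad_change t k $ l))"
    by (rule sum.swap)
  also have "\<dots> = (\<Sum>k\<in>UNIV. \<Phi> t k l *\<^sub>R Y t k $ l) + (\<Sum>k\<in>UNIV. grad_change t k $ l)"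
    by (simp add: A_colstoch sum.distrib flip: scaleR_sum_left)
  finally show ?case using Suc by (simp add: grad_change_def sum_subtractf)
qed (simp add: \<Phi>0 Y0)

lemma dist_Y_avg_gradient_le_spread:
  "norm (Y t j $ l - (1 / real CARD('n)) *\<^sub>R (\<Sum>k\<in>UNIV. gf k (X t k) $ l)) \<le> spread (\<lambda>k. Y t k $ l)"
proof -
  have "(1 / real CARD('n)) *\<^sub>R (\<Sum>k\<in>UNIV. gf k (X t k) $ l)
      = (\<Sum>k\<in>UNIV. (\<Phi> t k l / real CARD('n)) *\<^sub>R Y t k $ l)"
    by (simp add: gradient_tracking[symmetric] scaleR_sum_right)
  moreover have "norm (Y t j $ l - (\<Sum>k\<in>UNIV. (\<Phi> t k l / real CARD('n)) *\<^sub>R Y t k $ l)) \<le> spread (\<lambda>k. Y t k $ l)"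
    using \<Phi>_pos by (intro norm_sub_weighted_sum_le_spread) (simp_all add: less_imp_le sum_\<Phi> flip: sum_divide_distrib)
  ultimately show ?thesis by simp
qed

lemma Y_perturbed_consensus:
  assumes "0 < \<phi>" and \<phi>: "\<And>t j l. \<phi> \<le> \<Phi> t j l"
  shows "norm (Y (Suc t) j $ l - (\<Sum>k\<in>UNIV. mix_weight l t j k *\<^sub>R Y t k $ l))
    \<le> (\<Sum>k\<in>UNIV. norm (grad_change t k)) / \<phi>"
proof -
  have "Y (Suc t) j $ l - (\<Sum>k\<in>UNIV. mix_weight l t j k *\<^sub>R Y t k $ l)
      = (\<Sum>k\<in>UNIV. (A l t j k / \<Phi> (Suc t) j l) *\<^sub>R grad_change t k $ l)"
    by (simp add: Y_upd_UNIV mix_weight_def scaleR_add_right sum.distrib)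
  also have "norm \<dots> \<le> (\<Sum>k\<in>UNIV. (1 / \<phi>) * norm (grad_change t k))"
  proof (intro order_trans[OF norm_sum] sum_mono)
    fix k
    have "A l t j k / \<Phi> (Suc t) j l \<le> 1 / \<phi>"
      using A_le_1 A_nonneg \<phi>[of "Suc t" j l] \<open>0 < \<phi>\<close> by (intro frac_le) auto
    moreover have "0 \<le> A l t j k / \<Phi> (Suc t) j l"
      using A_nonneg[of l t j k] \<Phi>_pos[of "Suc t" j l] by simp
    ultimately have "(A l t j k / \<Phi> (Suc t) j l) * norm (grad_change t k $ l) \<le> 1 / \<phi> * norm (grad_change t k)"
      using Finite_Cartesian_Product.norm_nth_le[of "grad_change t k" l] \<open>0 < \<phi>\<close>
      by (intro mult_mono) simp_all
    then show "norm ((A l t j k / \<Phi> (Suc t) j l) *\<^sub>R grad_change t k $ l) \<le> 1 / \<phi> * norm (grad_change t k)"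
      by (simp only: norm_scaleR abs_of_nonneg[OF \<open>0 \<le> A l t j k / \<Phi> (Suc t) j l\<close>])
  qed
  finally show ?thesis by (simp add: sum_divide_distrib)
qed

lemma gradient_bound:
  obtains G where "\<And>j x. x \<in> prodK K \<Longrightarrow> norm (gf j x) \<le> G"
proof -
  have "bounded (\<Union>j. gf j ` prodK K)" by (rule bounded_UN) (simp_all add: gf_bounded)
  then obtain G where "\<forall>y\<in>(\<Union>j. gf j ` prodK K). norm y \<le> G" unfolding bounded_iff by blast
  then show ?thesis using that by blast
qed

lemma Y_spread_bounded:
  obtains S where "\<And>t l. spread (\<lambda>k. Y t k $ l) \<le> S"
proof -
  obtain \<phi> where "0 < \<phi>" and \<phi>: "\<And>t j l. \<phi> \<le> \<Phi> t j l" using \<Phi>_lower_bound by blast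
  obtain G where G: "\<And>j x. x \<in> prodK K \<Longrightarrow> norm (gf j x) \<le> G" using gradient_bound by blast
  obtain M C where erg: "\<And>l. ergodic_weights (mix_weight l) M C" using mix_weights_ergodic by blast
  define \<delta> where "\<delta> = real CARD('n) * (2 * G) / \<phi>"
  have drift: "(\<Sum>k\<in>UNIV. norm (grad_change t k)) / \<phi> \<le> \<delta>" for t
  proof -
    have "norm (grad_change t k) \<le> 2 * G" for k
      using norm_triangle_ineq4[of "gf k (X (Suc t) k)" "gf k (X t k)"]
        G[OF X_in_prodK[of "Suc t" k], of k] G[OF X_in_prodK[of t k], of k]
      unfolding grad_change_def by linarith
    then have "(\<Sum>k\<in>UNIV. norm (grad_change t k)) \<le> real CARD('n) * (2 * G)"
      using sum_mono[of UNIV "\<lambda>k. norm (grad_change t k)" "\<lambda>_. 2 * G"] by simp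
    then show ?thesis using \<open>0 < \<phi>\<close> by (simp add: \<delta>_def divide_right_mono)
  qed
  define S where "S l = spread (\<lambda>k. Y 0 k $ l) + 2 * M * \<delta> + 2 * M * \<delta> / C" for l
  have "spread (\<lambda>k. Y t k $ l) \<le> S l" for t l
    unfolding S_def
    by (rule ergodic_weights.spread_bounded[OF erg[of l], where v="\<lambda>t k. Y t k $ l"
          and \<epsilon>="\<lambda>t. (\<Sum>k\<in>UNIV. norm (grad_change t k)) / \<phi>"])
      (simp_all add: Y_perturbed_consensus[OF \<open>0 < \<phi>\<close> \<phi>] drift)
  moreover have "S l \<le> (\<Sum>l\<in>UNIV. \<bar>S l\<bar>)" for l
    by (rule order_trans[OF abs_ge_self member_le_sum[of l UNIV "\<lambda>l. \<bar>S l\<bar>"]]) simp_all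
  ultimately have "spread (\<lambda>k. Y t k $ l) \<le> (\<Sum>l\<in>UNIV. \<bar>S l\<bar>)" for t l
    by (rule order_trans)
  then show ?thesis using that by blast
qed

lemma Y_bounded:
  obtains B where "\<And>t j l. norm (Y t j $ l) \<le> B"
proof -
  obtain G where G: "\<And>j x. x \<in> prodK K \<Longrightarrow> norm (gf j x) \<le> G" using gradient_bound by blast
  obtain S where S: "\<And>t l. spread (\<lambda>k. Y t k $ l) \<le> S" using Y_spread_bounded by blast
  have avg_le: "norm ((1 / real CARD('n)) *\<^sub>R (\<Sum>k\<in>UNIV. gf k (X t k) $ l)) \<le> G" for t l
  proof -
    have "norm (\<Sum>k\<in>UNIV. gf k (X t k) $ l) \<le> (\<Sum>k\<in>(UNIV::'n set). G)"
    proof (intro order_trans[OF norm_sum] sum_mono)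
      fix k
      show "norm (gf k (X t k) $ l) \<le> G"
        using Finite_Cartesian_Product.norm_nth_le[of "gf k (X t k)" l] G[OF X_in_prodK[of t k], of k] by linarith
    qed
    then show ?thesis by (simp add: divide_le_eq mult.commute)
  qed
  have "norm (Y t j $ l) \<le> S + G" for t j l
    using norm_triangle_sub[of "Y t j $ l" "(1 / real CARD('n)) *\<^sub>R (\<Sum>k\<in>UNIV. gf k (X t k) $ l)"]
      dist_Y_avg_gradient_le_spread[of t j l] avg_le[of t l] S[of t l]
    by linarith
  then show ?thesis using that by blast
qed

lemma direction_bounded:
  obtains D where "\<And>t k l. norm (direction t k l) \<le> D"
proof -
  obtain B where B: "\<And>t j l. norm (Y t j $ l) \<le> B" using Y_bounded by blast
  obtain Mr where Mr: "\<And>l z v. z \<in> K l \<Longrightarrow> is_subgradient (r l) z v \<Longrightarrow> norm v \<le> Mr"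
    using r_subgradient_bound by blast
  define D where "D = (\<Sum>k\<in>UNIV. \<bar>2 * (real CARD('n) * B + Mr) / \<tau> k\<bar>)"
  have "norm (direction t k l) \<le> D" for t k l
  proof (cases "l = sel k t")
    case True
    then have "norm (direction t k l) \<le> 2 * (real CARD('n) * norm (Y t k $ l) + Mr) / \<tau> k"
      using local_argmin_dist_le[OF X_in_prodK Mr] by (simp add: direction_def xt_eq_argmin)
    also have "\<dots> \<le> 2 * (real CARD('n) * B + Mr) / \<tau> k"
      using B \<tau>_pos[of k] by (intro divide_right_mono mult_left_mono add_right_mono) auto
    also have "\<dots> \<le> \<bar>2 * (real CARD('n) * B + Mr) / \<tau> k\<bar>" by (rule abs_ge_self)
    also have "\<dots> \<le> D" unfolding D_def by (rule member_le_sum) simp_all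
    finally show ?thesis .
  qed (simp add: direction_def D_def sum_nonneg)
  then show ?thesis using that by blast
qed

lemma X_perturbed_consensus:
  assumes D: "\<And>t k l. norm (direction t k l) \<le> D"
  shows "norm (X (Suc t) j $ l - (\<Sum>k\<in>UNIV. mix_weight l t j k *\<^sub>R X t k $ l)) \<le> \<gamma> t * D"
proof -
  have "X (Suc t) j $ l - (\<Sum>k\<in>UNIV. mix_weight l t j k *\<^sub>R X t k $ l)
      = \<gamma> t *\<^sub>R (\<Sum>k\<in>UNIV. mix_weight l t j k *\<^sub>R direction t k l)"
    by (simp add: X_upd_mix_weight scaleR_add_right sum.distrib scaleR_sum_right mult.commute)
  moreover have "norm (\<Sum>k\<in>UNIV. mix_weight l t j k *\<^sub>R direction t k l) \<le> (\<Sum>k\<in>UNIV. mix_weight l t j k * D)"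
    using D mix_weight_nonneg by (intro order_trans[OF norm_sum] sum_mono) (simp add: mult_left_mono)
  ultimately show ?thesis
    using \<gamma>_pos[of t] by (simp add: mix_weight_row_sum mult_left_mono flip: sum_distrib_right)
qed

lemma \<gamma>_tendsto_zero: "\<gamma> \<longlonglongrightarrow> 0"
proof -
  have "(\<lambda>t. sqrt ((\<gamma> t)\<^sup>2)) \<longlonglongrightarrow> sqrt 0"
    by (intro tendsto_real_sqrt summable_LIMSEQ_zero[OF \<gamma>_sq])
  then show ?thesis using \<gamma>_pos by (simp add: less_imp_le)
qed

lemma X_spread_tendsto_zero: "(\<lambda>t. spread (\<lambda>k. X t k $ l)) \<longlonglongrightarrow> 0"
proof -
  obtain D where D: "\<And>t k l. norm (direction t k l) \<le> D" using direction_bounded by blast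
  obtain M C where "ergodic_weights (mix_weight l) M C" using mix_weights_ergodic by blast
  then show ?thesis
    by (rule ergodic_weights.spread_tendsto_zero[where v="\<lambda>t k. X t k $ l", OF _ X_perturbed_consensus[OF D]])
      (rule tendsto_mult_left_zero[OF \<gamma>_tendsto_zero])
qed

lemma X_increment_tendsto_zero: "(\<lambda>t. norm (X (Suc t) j - X t j)) \<longlonglongrightarrow> 0"
proof -
  obtain D where D: "\<And>t k l. norm (direction t k l) \<le> D" using direction_bounded by blast
  have block: "norm (X (Suc t) j $ l - X t j $ l) \<le> \<gamma> t * D + spread (\<lambda>k. X t k $ l)" for t l
  proof -
    have "norm (X t j $ l - (\<Sum>k\<in>UNIV. mix_weight l t j k *\<^sub>R X t k $ l)) \<le> spread (\<lambda>k. X t k $ l)"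
      by (rule norm_sub_weighted_sum_le_spread[OF mix_weight_nonneg mix_weight_row_sum])
    then show ?thesis
      using norm_diff_triangle_le[OF X_perturbed_consensus[OF D, of t j l]] by (simp add: norm_minus_commute)
  qed
  show ?thesis
  proof (rule Lim_null_comparison)
    have "norm (X (Suc t) j - X t j) \<le> (\<Sum>l\<in>UNIV. \<gamma> t * D + spread (\<lambda>k. X t k $ l))" for t
      by (rule order_trans[OF norm_vec_le_sum_norm sum_mono]) (simp add: block)
    then show "\<forall>\<^sub>F t in sequentially. norm (norm (X (Suc t) j - X t j)) \<le> (\<Sum>l\<in>UNIV. \<gamma> t * D + spread (\<lambda>k. X t k $ l))"
      by simp
    show "(\<lambda>t. \<Sum>l\<in>UNIV. \<gamma> t * D + spread (\<lambda>k. X t k $ l)) \<longlonglongrightarrow> 0"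
      by (intro tendsto_null_sum tendsto_add_zero tendsto_mult_left_zero \<gamma>_tendsto_zero X_spread_tendsto_zero)
  qed
qed

lemma X_disagreement_le: "norm (X t j - X t k) \<le> (\<Sum>l\<in>UNIV. spread (\<lambda>k. X t k $ l))"
proof (rule order_trans[OF norm_vec_le_sum_norm sum_mono])
  fix l
  show "norm ((X t j - X t k) $ l) \<le> spread (\<lambda>k. X t k $ l)"
    using norm_diff_le_spread[of "\<lambda>k. X t k $ l" j k] by simp
qed

lemma gf_lipschitz_abs:
  "x \<in> prodK K \<Longrightarrow> y \<in> prodK K \<Longrightarrow> norm (gf j x - gf j y) \<le> \<bar>Lf j\<bar> * norm (x - y)"
  using gf_lipschitz[of j] by (meson abs_ge_self mult_right_mono norm_ge_zero order_trans)

lemma grad_change_tendsto_zero: "(\<lambda>t. \<Sum>k\<in>UNIV. norm (grad_change t k)) \<longlonglongrightarrow> 0"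
proof (rule tendsto_null_sum)
  fix k
  have "norm (grad_change t k) \<le> \<bar>Lf k\<bar> * norm (X (Suc t) k - X t k)" for t
    by (simp add: grad_change_def gf_lipschitz_abs X_in_prodK)
  then show "(\<lambda>t. norm (grad_change t k)) \<longlonglongrightarrow> 0"
    by (intro Lim_null_comparison[OF always_eventually[OF allI]
          tendsto_mult_right_zero[OF X_increment_tendsto_zero]]) simp
qed

lemma Y_spread_tendsto_zero: "(\<lambda>t. spread (\<lambda>k. Y t k $ l)) \<longlonglongrightarrow> 0"
proof -
  obtain \<phi> where "0 < \<phi>" and \<phi>: "\<And>t j l. \<phi> \<le> \<Phi> t j l" using \<Phi>_lower_bound by blast
  obtain M C where "ergodic_weights (mix_weight l) M C" using mix_weights_ergodic by blast
  then show ?thesis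
    by (rule ergodic_weights.spread_tendsto_zero[where v="\<lambda>t k. Y t k $ l",
          OF _ Y_perturbed_consensus[OF \<open>0 < \<phi>\<close> \<phi>]])
      (rule tendsto_divide_zero[OF grad_change_tendsto_zero])
qed

lemma best_response_gap_le:
  "norm (xhat ft gf r K i (sel i t) (X t i) - xt t i)
    \<le> real CARD('n) * ((1 / real CARD('n)) * (\<Sum>j\<in>UNIV. \<bar>Lf j\<bar> * norm (X t i - X t j))
        + (\<Sum>l\<in>UNIV. spread (\<lambda>k. Y t k $ l))) / \<tau> i"
proof -
  define l where "l = sel i t"
  define n where "n = real CARD('n)"
  define g_i where "g_i = (1 / n) *\<^sub>R (\<Sum>j\<in>UNIV. gf j (X t i) $ l)"
  define g where "g = (1 / n) *\<^sub>R (\<Sum>j\<in>UNIV. gf j (X t j) $ l)"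
  have "norm (g_i - g) \<le> (1 / n) * (\<Sum>j\<in>UNIV. \<bar>Lf j\<bar> * norm (X t i - X t j))"
  proof -
    have "norm (g_i - g) = (1 / n) * norm (\<Sum>j\<in>UNIV. (gf j (X t i) - gf j (X t j)) $ l)"
      by (simp add: g_i_def g_def n_def sum_subtractf flip: scaleR_diff_right)
    also have "\<dots> \<le> (1 / n) * (\<Sum>j\<in>UNIV. \<bar>Lf j\<bar> * norm (X t i - X t j))"
    proof (intro mult_left_mono order_trans[OF norm_sum] sum_mono)
      fix j
      show "norm ((gf j (X t i) - gf j (X t j)) $ l) \<le> \<bar>Lf j\<bar> * norm (X t i - X t j)"
        using Finite_Cartesian_Product.norm_nth_le[of "gf j (X t i) - gf j (X t j)" l]
          gf_lipschitz_abs[OF X_in_prodK X_in_prodK, of j t i t j] by linarith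
    qed (simp add: n_def)
    finally show ?thesis .
  qed
  moreover have "norm (g - Y t i $ l) \<le> (\<Sum>l\<in>UNIV. spread (\<lambda>k. Y t k $ l))"
  proof -
    have "spread (\<lambda>k. Y t k $ l) \<le> (\<Sum>l\<in>UNIV. spread (\<lambda>k. Y t k $ l))"
      by (rule member_le_sum) (simp_all add: spread_nonneg)
    then show ?thesis
      using dist_Y_avg_gradient_le_spread[of t i l] by (simp add: g_def n_def norm_minus_commute)
  qed
  ultimately have "norm (g_i - Y t i $ l)
      \<le> (1 / n) * (\<Sum>j\<in>UNIV. \<bar>Lf j\<bar> * norm (X t i - X t j)) + (\<Sum>l\<in>UNIV. spread (\<lambda>k. Y t k $ l))"
    by (rule norm_diff_triangle_le)
  moreover have "norm (xhat ft gf r K i l (X t i) - xt t i) \<le> n * norm (g_i - Y t i $ l) / \<tau> i"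
    using local_argmin_lipschitz[OF X_in_prodK]
    by (simp add: xhat_eq_argmin xt_eq_argmin g_i_def n_def l_def)
  ultimately show ?thesis
    using \<tau>_pos[of i] by (simp add: l_def n_def divide_right_mono mult_left_mono order_trans)
qed

theorem best_response_gap_tendsto_zero:
  "(\<lambda>t. norm (xhat ft gf r K i (sel i t) (X t i) - xt t i)) \<longlonglongrightarrow> 0"
proof (rule Lim_null_comparison[OF always_eventually[OF allI]])
  show "norm (norm (xhat ft gf r K i (sel i t) (X t i) - xt t i))
    \<le> real CARD('n) * ((1 / real CARD('n)) * (\<Sum>j\<in>UNIV. \<bar>Lf j\<bar> * norm (X t i - X t j))
        + (\<Sum>l\<in>UNIV. spread (\<lambda>k. Y t k $ l))) / \<tau> i" for t
    using best_response_gap_le by simp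
  have "(\<lambda>t. norm (X t i - X t j)) \<longlonglongrightarrow> 0" for j
    using X_disagreement_le
    by (intro Lim_null_comparison[OF always_eventually[OF allI] tendsto_null_sum[OF X_spread_tendsto_zero]])
      simp
  then show "(\<lambda>t. real CARD('n) * ((1 / real CARD('n)) * (\<Sum>j\<in>UNIV. \<bar>Lf j\<bar> * norm (X t i - X t j))
        + (\<Sum>l\<in>UNIV. spread (\<lambda>k. Y t k $ l))) / \<tau> i) \<longlonglongrightarrow> 0"
    by (intro tendsto_divide_zero tendsto_mult_right_zero tendsto_add_zero tendsto_null_sum
        Y_spread_tendsto_zero)
qed

end

text \<open>Coercivity of \<open>U\<close>, the \<open>C\<^sup>1\<close> assumptions on \<open>f\<close> and on the surrogate gradients, and the conditions
  that \<open>\<gamma>\<close> decreases and is not summable serve the convergence of the iterates to stationary points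
  in the paper; the vanishing of the best-response gap does not need them.\<close>
theorem mainTheorem9:
  fixes K :: "'b::finite \<Rightarrow> (real^'d) set"
    and f :: "'n::finite \<Rightarrow> real^'d^'b \<Rightarrow> real"
    and gf :: "'n \<Rightarrow> real^'d^'b \<Rightarrow> real^'d^'b"
    and Lf :: "'n \<Rightarrow> real"
    and r :: "'b \<Rightarrow> real^'d \<Rightarrow> real"
    and E :: "('n \<times> 'n) set"
    and sel :: "'n \<Rightarrow> nat \<Rightarrow> 'b"
    and A :: "'b \<Rightarrow> nat \<Rightarrow> 'n \<Rightarrow> 'n \<Rightarrow> real"
    and \<kappa> :: real
    and ft :: "'n \<Rightarrow> 'b \<Rightarrow> real^'d \<Rightarrow> real^'d^'b \<Rightarrow> real"
    and gft :: "'n \<Rightarrow> 'b \<Rightarrow> real^'d \<Rightarrow> real^'d^'b \<Rightarrow> real^'d"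
    and \<tau> :: "'n \<Rightarrow> real"
    and \<gamma> :: "nat \<Rightarrow> real"
    and X :: "nat \<Rightarrow> 'n \<Rightarrow> real^'d^'b"
    and Y :: "nat \<Rightarrow> 'n \<Rightarrow> real^'d^'b"
    and \<Phi> :: "nat \<Rightarrow> 'n \<Rightarrow> 'b \<Rightarrow> real"
    and xt :: "nat \<Rightarrow> 'n \<Rightarrow> real^'d"
    and i :: 'n
  assumes K_ne: "\<And>l. K l \<noteq> {}"
    and K_closed: "\<And>l. closed (K l)"
    and K_convex: "\<And>l. convex (K l)"
    and f_C1: "\<And>j. \<exists>S. open S \<and> prodK K \<subseteq> S \<and> continuous_on S (gf j) \<and>
                   (\<forall>x\<in>S. (f j has_derivative (\<lambda>h. gf j x \<bullet> h)) (at x))"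
    and gf_lipschitz: "\<And>j. \<forall>x\<in>prodK K. \<forall>y\<in>prodK K. norm (gf j x - gf j y) \<le> Lf j * norm (x - y)"
    and gf_bounded: "\<And>j. bounded (gf j ` prodK K)"
    and r_convex: "\<And>l. convex_on UNIV (r l)"
    and r_subgrad_bounded: "\<And>l. \<exists>M. \<forall>z\<in>K l. \<forall>v. is_subgradient (r l) z v \<longrightarrow> norm v \<le> M"
    and U_coercive: "\<And>M. \<exists>R. \<forall>x\<in>prodK K. R \<le> norm x \<longrightarrow>
                        M \<le> (\<Sum>j\<in>UNIV. f j x) + (\<Sum>l\<in>UNIV. r l (x $ l))"
    and E_strong: "\<And>j k. (j, k) \<in> E\<^sup>*"
    and E_loops: "\<And>j. (j, j) \<in> E"
    and sel_cover: "\<And>j. \<exists>T>0. \<forall>t. (\<Union>s<T. {sel j (t + s)}) = UNIV"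
    and \<kappa>_pos: "\<kappa> > 0"
    and A_pos: "\<And>l t j k. (k, j) \<in> edges_blk E sel l t \<Longrightarrow> A l t j k > \<kappa>"
    and A_zero: "\<And>l t j k. (k, j) \<notin> edges_blk E sel l t \<Longrightarrow> A l t j k = 0"
    and A_colstoch: "\<And>l t k. (\<Sum>j\<in>UNIV. A l t j k) = 1"
    and \<tau>_pos: "\<And>j. \<tau> j > 0"
    and ft_deriv: "\<And>j l x z. x \<in> prodK K \<Longrightarrow> z \<in> K l \<Longrightarrow>
                     ((\<lambda>u. ft j l u x) has_derivative (\<lambda>h. gft j l z x \<bullet> h)) (at z)"
    and ft_C1: "\<And>j l x. x \<in> prodK K \<Longrightarrow> continuous_on (K l) (\<lambda>z. gft j l z x)"
    and ft_strong: "\<And>j l x. x \<in> prodK K \<Longrightarrow> strongly_convex_on (K l) (\<tau> j) (\<lambda>z. ft j l z x)"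
    and ft_grad: "\<And>j l x. x \<in> prodK K \<Longrightarrow> gft j l (x $ l) x = gf j x $ l"
    and ft_lipschitz: "\<And>j l. \<exists>L. \<forall>z\<in>K l. \<forall>x\<in>prodK K. \<forall>y\<in>prodK K.
                          norm (gft j l z x - gft j l z y) \<le> L * norm (x - y)"
    and \<gamma>_pos: "\<And>t. 0 < \<gamma> t"
    and \<gamma>_le1: "\<And>t. \<gamma> t \<le> 1"
    and \<gamma>_mono: "\<And>t. \<gamma> (Suc t) \<le> \<gamma> t"
    and \<gamma>_div: "\<not> summable \<gamma>"
    and \<gamma>_sq: "summable (\<lambda>t. (\<gamma> t)\<^sup>2)"
    and X0: "\<And>j. X 0 j \<in> prodK K"
    and Y0: "\<And>j. Y 0 j = gf j (X 0 j)"
    and \<Phi>0: "\<And>j l. \<Phi> 0 j l = 1"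
    and xt_def: "\<And>t j. xt t j = argmin_on (K (sel j t))
                   (\<lambda>z. fhat ft gf j (sel j t) z (X t j) (Y t j $ sel j t) + r (sel j t) z)"
    and \<Phi>_upd: "\<And>t j l. \<Phi> (Suc t) j l = (\<Sum>k\<in>nbrs_blk E sel j l t. A l t j k * \<Phi> t k l)"
    and X_upd: "\<And>t j l. X (Suc t) j $ l =
                  (\<Sum>k\<in>nbrs_blk E sel j l t. (A l t j k * \<Phi> t k l / \<Phi> (Suc t) j l) *\<^sub>R
                     (X t k $ l + \<gamma> t *\<^sub>R (if l = sel k t then xt t k - X t k $ l else 0)))"
    and Y_upd: "\<And>t j l. Y (Suc t) j $ l =
                  (\<Sum>k\<in>nbrs_blk E sel j l t. (A l t j k / \<Phi> (Suc t) j l) *\<^sub>R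
                     (\<Phi> t k l *\<^sub>R (Y t k $ l) + gf k (X (Suc t) k) $ l - gf k (X t k) $ l))"
  shows "(\<lambda>t. norm (xhat ft gf r K i (sel i t) (X t i) - xt t i)) \<longlonglongrightarrow> 0"
proof -
  interpret tracking_scheme E sel A \<kappa> \<Phi> K gf Lf r ft gft \<tau> \<gamma> X Y xt
    by unfold_locales (fact assms)+
  show ?thesis by (rule best_response_gap_tendsto_zero)
qed

end
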